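(* For every integer $n\geq 1$, the Wang shift $\Omega_n$ defined by the set $\mathcal{T}_n$ of $(n+3)^2$ Wang tiles is self-similar. More precisely, there exists an expansive and recognizable 2-dimensional substitution $\omega_n:\Omega_n\to\Omega_n$ which is onto up to a shift, that is, such that $\Omega_n=\overline{\omega_n(\Omega_n)}^{\sigma}:=\{\sigma^{\mathbf{k}}\omega_n(x)\mid \mathbf{k}\in\mathbb{Z}^2,\ x\in\Omega_n\}$.
   Context: Fix an integer $n\ge1$. Let $V_n=\{(v_0,v_1,v_2)\in\mathbb{Z}^3: 0\le v_0\le v_1\le 1,\ v_1\le v_2\le n+1\}$; write $(v_0,v_1,v_2)$ as the word $v_0v_1v_2$ (e.g. $11(n+1)$ is $(1,1,n+1)$). A Wang tile is a quadruple $t=(a,b,c,d)$ of labels with $\mathrm{RIGHT}(t)=a$, $\mathrm{TOP}(t)=b$, $\mathrm{LEFT}(t)=c$, $\mathrm{BOTTOM}(t)=d$. For $t=(a,b,c,d)$ let $\hat t=(b,a,d,c)$ and $\hat S=\{\hat t: t\in S\}$. Define (tiles written as (right, top, left, bottom)): $W_n=\{(11(i+1),11(j+1),11i,11j):1\le i,j\le n\}$; $b_n^i=(00(i+1),111,00i,11n)$, $B_n=\{b_n^i:0\le i\le n-1\}$; $g_n^i=(01(i+1),111,00i,11(n+1))$, $G_n=\{g_n^i:0\le i\le n\}$; $y_n^i=(01(i+1),112,01i,11(n+1))$, $Y_n=\{y_n^i:1\le i\le n\}$; junction tiles $j_n^{k,l,r,s}=((0,k,l),(0,r,s),(0,s,r+n),(0,l,k+n))$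 for $(k,l),(r,s)\in\{(0,0),(0,1),(1,1)\}$; $J_n$ is the set of these 9 tiles minus $j_n^{0,0,1,1}$ and $j_n^{1,1,0,0}$. $\mathcal{T}_n=W_n\cup B_n\cup G_n\cup Y_n\cup\hat B_n\cup\hat G_n\cup\hat Y_n\cup J_n$. A configuration $x:\mathbb{Z}^2\to\mathcal{T}_n$ is valid if $\mathrm{RIGHT}(x(\mathbf m))=\mathrm{LEFT}(x(\mathbf m+\mathbf e_1))$ and $\mathrm{TOP}(x(\mathbf m))=\mathrm{BOTTOM}(x(\mathbf m+\mathbf e_2))$ for all $\mathbf m\in\mathbb{Z}^2$; $\Omega_n$ is the set of valid configurations, with shift action $(\sigma^{\mathbf k}x)_{\mathbf m}=x_{\mathbf m+\mathbf k}$. A 2-dimensional word of size $(n_1,n_2)$ over $\mathcal A$ is a map $[0,n_1-1]\times[0,n_2-1]\to\mathcal A$; $u\odot^i v$ denotes concatenation in direction $\mathbf e_i$ (defined when the other dimension agrees). A 2-dimensional morphism on a factorial language $L$ of 2-dimensional words is a map $\omega$ from $L$ to 2-dimensional words with $\omega(u\odot^i v)=\omega(u)\odot^i\omega(v)$ whenever $u\odot^i v\in L$; it is determined by the images of letters. It extends to configurations $x$ of the subshift $X$ generated by $L$ (a 2-dimensional substitution) by concatenating the images $\omega(x_{\mathbf m})$, with the lower-left cell of $\omega(x_{\mathbf 0})$ at the origin. $\omega$ is expansive if for every letter $a$ and $K\in\mathbb N$ there is $m$ with both dimensions of $\omega^m(a)$ larger than $K$. $\omega$ is recognizable in $X$ if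 every configuration $y$ has at most one pair $(\mathbf k,x)$ with $x\in X$, $y=\sigma^{\mathbf k}\omega(x)$ and $\mathbf 0\le\mathbf k<$ size of $\omega(x_{\mathbf 0})$ coordinatewise. *)

theory Defs
  imports Main
begin

type_synonym label = "int \<times> int \<times> int"
(* a Wang tile (right, top, left, bottom) *)
type_synonym tile = "label \<times> label \<times> label \<times> label"

definition RIGHT :: "tile \<Rightarrow> label" where "RIGHT t = fst t"
definition TOP :: "tile \<Rightarrow> label" where "TOP t = fst (snd t)"
definition LEFT :: "tile \<Rightarrow> label" where "LEFT t = fst (snd (snd t))"
definition BOTTOM :: "tile \<Rightarrow> label" where "BOTTOM t = snd (snd (snd t))"

definition hat :: "tile \<Rightarrow> tile" where
  "hat t = (case t of (a, b, c, d) \<Rightarrow> (b, a, d, c))"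

definition Wset :: "nat \<Rightarrow> tile set" where
  "Wset n = {((1,1,i+1), (1,1,j+1), (1,1,i), (1,1,j)) | i j::int.
              1 \<le> i \<and> i \<le> int n \<and> 1 \<le> j \<and> j \<le> int n}"

definition Bset :: "nat \<Rightarrow> tile set" where
  "Bset n = {((0,0,i+1), (1,1,1), (0,0,i), (1,1,int n)) | i::int. 0 \<le> i \<and> i \<le> int n - 1}"

definition Gset :: "nat \<Rightarrow> tile set" where
  "Gset n = {((0,1,i+1), (1,1,1), (0,0,i), (1,1,int n + 1)) | i::int. 0 \<le> i \<and> i \<le> int n}"

definition Yset :: "nat \<Rightarrow> tile set" where
  "Yset n = {((0,1,i+1), (1,1,2), (0,1,i), (1,1,int n + 1)) | i::int. 1 \<le> i \<and> i \<le> int n}"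

definition junction :: "nat \<Rightarrow> int \<Rightarrow> int \<Rightarrow> int \<Rightarrow> int \<Rightarrow> tile" where
  "junction n k l r s = ((0,k,l), (0,r,s), (0,s,r + int n), (0,l,k + int n))"

definition Jset :: "nat \<Rightarrow> tile set" where
  "Jset n = {junction n k l r s | k l r s.
              (k,l) \<in> {(0,0),(0,1),(1,1)} \<and> (r,s) \<in> {(0,0),(0,1),(1,1)}
              \<and> (k,l,r,s) \<noteq> (0,0,1,1) \<and> (k,l,r,s) \<noteq> (1,1,0,0)}"

definition Tset :: "nat \<Rightarrow> tile set" where
  "Tset n = Wset n \<union> Bset n \<union> Gset n \<union> Yset n
           \<union> hat ` Bset n \<union> hat ` Gset n \<union> hat ` Yset n \<union> Jset n"

definition valid :: "tile set \<Rightarrow> (int \<times> int \<Rightarrow> tile) \<Rightarrow> bool" where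
  "valid T x \<longleftrightarrow> (\<forall>m. x m \<in> T) \<and>
     (\<forall>a b. RIGHT (x (a, b)) = LEFT (x (a + 1, b)) \<and> TOP (x (a, b)) = BOTTOM (x (a, b + 1)))"

definition Omega :: "nat \<Rightarrow> (int \<times> int \<Rightarrow> tile) set" where
  "Omega n = {x. valid (Tset n) x}"

definition shift :: "int \<times> int \<Rightarrow> (int \<times> int \<Rightarrow> 'a) \<Rightarrow> (int \<times> int \<Rightarrow> 'a)" where
  "shift k x = (\<lambda>m. x (fst m + fst k, snd m + snd k))"

(* a 2-dimensional word: its size (n1,n2) and its content on [0,n1-1] x [0,n2-1]
   (values outside the domain are irrelevant) *)
type_synonym 'a word2 = "(nat \<times> nat) \<times> (nat \<times> nat \<Rightarrow> 'a)"

definition wsize :: "'a word2 \<Rightarrow> nat \<times> nat" where "wsize u = fst u"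
definition wcont :: "'a word2 \<Rightarrow> nat \<times> nat \<Rightarrow> 'a" where "wcont u = snd u"

definition letter_word :: "'a \<Rightarrow> 'a word2" where
  "letter_word a = ((1, 1), (\<lambda>_. a))"

(* image of a finite word under the morphism given by letter images omega:
   concatenation of the images (widths read off row 0, heights off column 0) *)
definition subst_word :: "('a \<Rightarrow> 'b word2) \<Rightarrow> 'a word2 \<Rightarrow> 'b word2" where
  "subst_word \<omega> u =
     (let n1 = fst (wsize u); n2 = snd (wsize u); c = wcont u in
      if n1 = 0 \<or> n2 = 0 then ((0, 0), (\<lambda>_. undefined)) else
      let W = (\<lambda>i. fst (wsize (\<omega> (c (i, 0)))));
          H = (\<lambda>j. snd (wsize (\<omega> (c (0, j)))));
          PW = (\<lambda>i. \<Sum>k<i. W k);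
          PH = (\<lambda>j. \<Sum>k<j. H k)
      in ((PW n1, PH n2),
          (\<lambda>(p1, p2). let i = (LEAST i. p1 < PW (Suc i));
                           j = (LEAST j. p2 < PH (Suc j))
                       in wcont (\<omega> (c (i, j))) (p1 - PW i, p2 - PH j))))"

definition blk_pos :: "(int \<Rightarrow> nat) \<Rightarrow> int \<Rightarrow> int" where
  "blk_pos W i = (if 0 \<le> i then int (\<Sum>k\<in>{0..<i}. W k) else - int (\<Sum>k\<in>{i..<0}. W k))"

definition blk_index :: "(int \<Rightarrow> nat) \<Rightarrow> int \<Rightarrow> int" where
  "blk_index W p = (THE i. blk_pos W i \<le> p \<and> p < blk_pos W (i + 1))"

(* extension of the morphism to configurations: the images omega(x_m) are
   concatenated, with the lower-left cell of omega(x_0) at the origin *)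
definition subst_cfg :: "('a \<Rightarrow> 'b word2) \<Rightarrow> (int \<times> int \<Rightarrow> 'a) \<Rightarrow> (int \<times> int \<Rightarrow> 'b)" where
  "subst_cfg \<omega> x = (\<lambda>(p1, p2).
     let W = (\<lambda>i. fst (wsize (\<omega> (x (i, 0)))));
         H = (\<lambda>j. snd (wsize (\<omega> (x (0, j)))));
         i = blk_index W p1;
         j = blk_index H p2
     in wcont (\<omega> (x (i, j))) (nat (p1 - blk_pos W i), nat (p2 - blk_pos H j)))"

(* letter images are compatible on the language of X, so that omega is a
   2-dimensional morphism on that language: horizontally adjacent letters have
   images of equal height, vertically adjacent letters images of equal width *)
definition is_morphism_on :: "(int \<times> int \<Rightarrow> 'a) set \<Rightarrow> ('a \<Rightarrow> 'b word2) \<Rightarrow> bool" where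
  "is_morphism_on X \<omega> \<longleftrightarrow> (\<forall>x\<in>X. \<forall>a b.
      snd (wsize (\<omega> (x (a, b)))) = snd (wsize (\<omega> (x (a + 1, b)))) \<and>
      fst (wsize (\<omega> (x (a, b)))) = fst (wsize (\<omega> (x (a, b + 1)))))"

definition letters :: "(int \<times> int \<Rightarrow> 'a) set \<Rightarrow> 'a set" where
  "letters X = {x m | x m. x \<in> X}"

definition expansive :: "(int \<times> int \<Rightarrow> 'a) set \<Rightarrow> ('a \<Rightarrow> 'a word2) \<Rightarrow> bool" where
  "expansive X \<omega> \<longleftrightarrow> (\<forall>a\<in>letters X. \<forall>K::nat. \<exists>m::nat.
      K < fst (wsize ((subst_word \<omega> ^^ m) (letter_word a))) \<and>
      K < snd (wsize ((subst_word \<omega> ^^ m) (letter_word a))))"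

definition recognizable :: "(int \<times> int \<Rightarrow> 'a) set \<Rightarrow> ('a \<Rightarrow> 'a word2) \<Rightarrow> bool" where
  "recognizable X \<omega> \<longleftrightarrow> (\<forall>y k x k' x'.
      x \<in> X \<and> y = shift k (subst_cfg \<omega> x) \<and>
      0 \<le> fst k \<and> fst k < int (fst (wsize (\<omega> (x (0, 0))))) \<and>
      0 \<le> snd k \<and> snd k < int (snd (wsize (\<omega> (x (0, 0))))) \<and>
      x' \<in> X \<and> y = shift k' (subst_cfg \<omega> x') \<and>
      0 \<le> fst k' \<and> fst k' < int (fst (wsize (\<omega> (x' (0, 0))))) \<and>
      0 \<le> snd k' \<and> snd k' < int (snd (wsize (\<omega> (x' (0, 0)))))
      \<longrightarrow> k = k' \<and> x = x')"

end

theory Submission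
  imports Defs
begin

text \<open>The substitution \<open>\<omega>\<^sub>n\<close> reads the left and bottom labels of a tile as descriptions of a
  vertical and a horizontal path (initial counter, the place where the carried bit switches from 0
  to 1, and length \<open>n - 1\<close> or \<open>n\<close>) and replaces the tile by a block with a junction in its corner,
  these two paths along its left and bottom sides, and tiles of \<open>W\<^sub>n\<close> whose counters continue them.

  Conversely, in a tiling of \<open>\<Omega>\<^sub>n\<close> the counters force the rows and columns made of junctions and
  path tiles to recur with gaps \<open>n - 1\<close> or \<open>n\<close>. They cut the tiling into blocks, and the four paths
  around a block encode a tile of a slightly larger tile set; these tiles form a valid tiling, in
  which a counting argument excludes the extra tiles. Recognizability holds because junctions
  occur exactly at block corners, which fixes the shift, and the paths along the sides of a block
  determine its tile.\<close>

lemma int_shift_invariant_const: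
  fixes f :: "int \<Rightarrow> 'a"
  assumes "\<And>c. f (c + 1) = f c"
  shows "f c = f 0"
proof (induct c rule: int_induct[where k=0])
  case (step2 i) then show ?case using assms[of "i - 1"] by simp
qed (use assms in auto)

lemma strict_mono_int_succ:
  fixes f :: "int \<Rightarrow> 'a::order"
  assumes "\<And>i. f i < f (i + 1)"
  shows "strict_mono f"
proof
  fix i j :: int assume "i < j"
  then show "f i < f j"
  proof (induct j rule: int_gr_induct)
    case (step j) then show ?case using assms[of j] by (meson less_trans)
  qed (use assms in auto)
qed

lemma strict_mono_range_succ_le:
  fixes f g :: "int \<Rightarrow> 'a::linorder"
  assumes "strict_mono f" "strict_mono g" "range f \<subseteq> range g" "f i = g i"
  shows "g (i + 1) \<le> f (i + 1)" and "f (i - 1) \<le> g (i - 1)"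
proof -
  obtain j where j: "f (i + 1) = g j" using assms(3) by blast
  have "g i < g j" using j assms(4) strict_monoD[OF assms(1), of i "i + 1"] by simp
  then show "g (i + 1) \<le> f (i + 1)"
    using j strict_mono_less[OF assms(2)] strict_mono_less_eq[OF assms(2), of "i + 1" j] by simp
next
  obtain j where j: "f (i - 1) = g j" using assms(3) by blast
  have "g j < g i" using j assms(4) strict_monoD[OF assms(1), of "i - 1" i] by simp
  then show "f (i - 1) \<le> g (i - 1)"
    using j strict_mono_less[OF assms(2)] strict_mono_less_eq[OF assms(2), of j "i - 1"] by simp
qed

lemma strict_mono_range_eq:
  fixes f g :: "int \<Rightarrow> 'a::linorder"
  assumes f: "strict_mono f" and g: "strict_mono g" and r: "range f = range g" and 0: "f 0 = g 0"
  shows "f = g"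
proof
  have le: "g (i + 1) \<le> f (i + 1)" "f (i - 1) \<le> g (i - 1)"
    and ge: "f (i + 1) \<le> g (i + 1)" "g (i - 1) \<le> f (i - 1)" if "f i = g i" for i
    using strict_mono_range_succ_le[OF f g _ that] strict_mono_range_succ_le[OF g f _ that[symmetric]] r
    by auto
  fix i show "f i = g i"
  proof (induct i rule: int_induct[where k=0])
    case (step1 i) then show ?case using le(1) ge(1) by (meson order.antisym)
  next
    case (step2 i) then show ?case using le(2) ge(2) by (meson order.antisym)
  qed (rule 0)
qed

definition next_in :: "(int \<Rightarrow> bool) \<Rightarrow> int \<Rightarrow> int" where
  "next_in P r = r + int (LEAST d::nat. 1 \<le> d \<and> P (r + int d))"

definition prev_in :: "(int \<Rightarrow> bool) \<Rightarrow> int \<Rightarrow> int" where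
  "prev_in P r = r - int (LEAST d::nat. 1 \<le> d \<and> P (r - int d))"

definition enum_in :: "(int \<Rightarrow> bool) \<Rightarrow> int \<Rightarrow> int" where
  "enum_in P j = (if 0 \<le> j then (next_in P ^^ nat j) (prev_in P 1) else (prev_in P ^^ nat (- j)) (prev_in P 1))"

context
  fixes P :: "int \<Rightarrow> bool"
  assumes above: "\<And>r. \<exists>d. 1 \<le> d \<and> P (r + d)"
    and below: "\<And>r. \<exists>d. 1 \<le> d \<and> P (r - d)"
begin

lemma next_in_props: "P (next_in P r)" "r < next_in P r" "r < \<rho> \<Longrightarrow> \<rho> < next_in P r \<Longrightarrow> \<not> P \<rho>"
proof -
  obtain d where d: "1 \<le> d" "P (r + d)" using above by blast
  let ?Q = "\<lambda>d::nat. 1 \<le> d \<and> P (r + int d)"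
  have "?Q (Least ?Q)" by (rule LeastI[of ?Q "nat d"]) (use d in auto)
  then show "P (next_in P r)" "r < next_in P r" by (auto simp: next_in_def)
  assume "r < \<rho>" "\<rho> < next_in P r"
  then show "\<not> P \<rho>" using not_less_Least[of "nat (\<rho> - r)" ?Q] by (auto simp: next_in_def)
qed

lemma prev_in_props: "P (prev_in P r)" "prev_in P r < r" "prev_in P r < \<rho> \<Longrightarrow> \<rho> < r \<Longrightarrow> \<not> P \<rho>"
proof -
  obtain d where d: "1 \<le> d" "P (r - d)" using below by blast
  let ?Q = "\<lambda>d::nat. 1 \<le> d \<and> P (r - int d)"
  have "?Q (Least ?Q)" by (rule LeastI[of ?Q "nat d"]) (use d in auto)
  then show "P (prev_in P r)" "prev_in P r < r" by (auto simp: prev_in_def)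
  assume "prev_in P r < \<rho>" "\<rho> < r"
  then show "\<not> P \<rho>" using not_less_Least[of "nat (r - \<rho>)" ?Q] by (auto simp: prev_in_def)
qed

lemma next_prev_in:
  assumes "P r"
  shows "next_in P (prev_in P r) = r"
proof -
  have "\<not> next_in P (prev_in P r) < r"
    using next_in_props(1,2)[of "prev_in P r"] prev_in_props(3)[where \<rho>="next_in P (prev_in P r)"] by auto
  moreover have "\<not> r < next_in P (prev_in P r)"
    using next_in_props(3)[where r="prev_in P r"] prev_in_props(2) assms by auto
  ultimately show ?thesis by simp
qed

lemma enum_in_mem: "P (enum_in P j)"
proof -
  have "P ((next_in P ^^ k) (prev_in P 1))" "P ((prev_in P ^^ k) (prev_in P 1))" for k
    by (induct k) (auto simp: next_in_props(1) prev_in_props(1))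
  then show ?thesis by (simp add: enum_in_def)
qed

lemma enum_in_succ: "enum_in P (j + 1) = next_in P (enum_in P j)"
proof (cases "0 \<le> j")
  case True
  then have "nat (j + 1) = Suc (nat j)" by simp
  then show ?thesis using True by (simp add: enum_in_def)
next
  case False
  show ?thesis
  proof (cases "j = -1")
    case True then show ?thesis by (simp add: enum_in_def next_prev_in prev_in_props(1))
  next
    case False
    with \<open>\<not> 0 \<le> j\<close> have "nat (- j) = Suc (nat (- (j + 1)))" "\<not> 0 \<le> j + 1" by auto
    then have "enum_in P j = prev_in P (enum_in P (j + 1))" using \<open>\<not> 0 \<le> j\<close> by (simp add: enum_in_def)
    then show ?thesis using next_prev_in[OF enum_in_mem[of "j + 1"]] by simp
  qed
qed

lemma enum_in_less: "enum_in P j < enum_in P (j + 1)"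
  using next_in_props(2) enum_in_succ by simp

lemma between_enum_in: "enum_in P j < \<rho> \<Longrightarrow> \<rho> < enum_in P (j + 1) \<Longrightarrow> \<not> P \<rho>"
  using next_in_props(3) enum_in_succ by simp

end

lemma translate_offset_eq:
  fixes A B :: "int set"
  assumes "0 \<in> A" "0 \<in> B" "\<And>q. q \<in> A \<Longrightarrow> \<not> (0 < q \<and> q < a)" "\<And>q. q \<in> B \<Longrightarrow> \<not> (0 < q \<and> q < b)"
    and translate: "\<And>p. p + k \<in> A \<longleftrightarrow> p + k' \<in> B"
    and "0 \<le> k" "k < a" "0 \<le> k'" "k' < b"
  shows "k = k'"
proof (rule ccontr)
  assume "k \<noteq> k'"
  then consider "k < k'" | "k' < k" by linarith
  then show False
  proof cases
    case 1 then show False using translate[of "- k"] assms(1,4,6,9) by fastforce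
  next
    case 2 then show False using translate[of "- k'"] assms(2,3,7,8) by fastforce
  qed
qed

definition thr :: "int \<Rightarrow> int \<Rightarrow> int" where
  "thr t d = (if t \<le> d then 1 else 0)"

lemma thr_01: "thr t d = 0 \<or> thr t d = 1" by (simp add: thr_def)
lemma thr_0_iff: "thr t d = 0 \<longleftrightarrow> d < t" by (simp add: thr_def)
lemma thr_1_iff: "thr t d = 1 \<longleftrightarrow> t \<le> d" by (simp add: thr_def)

lemma monotone_01_thr:
  fixes \<beta> :: "int \<Rightarrow> int"
  assumes "0 \<le> L"
    and bits: "\<And>d. 0 \<le> d \<Longrightarrow> d \<le> L \<Longrightarrow> \<beta> d = 0 \<or> \<beta> d = 1"
    and steps: "\<And>d. 1 \<le> d \<Longrightarrow> d \<le> L \<Longrightarrow> \<beta> (d - 1) \<le> \<beta> d"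
  shows "\<exists>t. 0 \<le> t \<and> t \<le> L + 1 \<and> (\<forall>d. 0 \<le> d \<and> d \<le> L \<longrightarrow> \<beta> d = thr t d)"
proof -
  have mono: "\<beta> d \<le> \<beta> d'" if "0 \<le> d" "d \<le> d'" "d' \<le> L" for d d'
    using that(2,3)
  proof (induct d' rule: int_ge_induct)
    case (step i) then show ?case using steps[of "i + 1"] that(1) by force
  qed simp
  define S where "S = {d. 0 \<le> d \<and> d \<le> L \<and> \<beta> d = 1}"
  have "finite S" unfolding S_def by (rule finite_subset[of _ "{0..L}"]) auto
  show ?thesis
  proof (cases "S = {}")
    case True
    then show ?thesis using assms(1) bits by (intro exI[of _ "L + 1"]) (force simp: S_def thr_def)
  next
    case False
    define t where "t = Min S"
    have t: "t \<in> S" "\<And>d. d \<in> S \<Longrightarrow> t \<le> d" using Min_in Min_le \<open>finite S\<close> False by (auto simp: t_def)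
    have "\<beta> d = thr t d" if "0 \<le> d" "d \<le> L" for d
    proof (cases "t \<le> d")
      case True
      then show ?thesis using mono[of t d] t(1) that bits[of d] by (auto simp: S_def thr_def)
    next
      case False
      then show ?thesis using t(2)[of d] that bits[of d] by (force simp: S_def thr_def)
    qed
    then show ?thesis using t(1) by (intro exI[of _ t]) (auto simp: S_def)
  qed
qed

lemma thr_inj:
  assumes "0 \<le> a" "a \<le> L + 1" "0 \<le> b" "b \<le> L + 1" "\<And>d. 0 \<le> d \<Longrightarrow> d \<le> L \<Longrightarrow> thr a d = thr b d"
  shows "a = b"
proof (rule ccontr)
  assume "a \<noteq> b"
  then consider "a < b" | "b < a" by linarith
  then show False
  proof cases
    case 1 then show False using assms(5)[of a] assms by (simp add: thr_def)
  next
    case 2 then show False using assms(5)[of b] assms by (simp add: thr_def)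
  qed
qed

lemma thr_shift_eq:
  assumes "0 \<le> a" "a \<le> L" "1 \<le> b" "b \<le> L + 1"
    and "\<And>d. 1 \<le> d \<Longrightarrow> d \<le> L \<Longrightarrow> thr a (d - 1) = thr b d"
  shows "b = a + 1"
proof (rule ccontr)
  assume "b \<noteq> a + 1"
  then consider "b \<le> a" | "a + 2 \<le> b" by linarith
  then show False
  proof cases
    case 1 then show False using assms(5)[of b] assms by (simp add: thr_def)
  next
    case 2 then show False using assms(5)[of "a + 1"] assms by (simp add: thr_def)
  qed
qed

lemma blk_pos_0[simp]: "blk_pos W 0 = 0" by (simp add: blk_pos_def)

lemma blk_pos_succ: "blk_pos W (i + 1) = blk_pos W i + int (W i)"
proof (cases "0 \<le> i")
  case True
  then have "{0..<i + 1} = insert i {0..<i}" by auto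
  then show ?thesis using True by (simp add: blk_pos_def)
next
  case False
  then have "{i..<0} = insert i {i + 1..<0}" by auto
  moreover have "blk_pos W (i + 1) = - int (\<Sum>k\<in>{i + 1..<0}. W k)"
    using False by (cases "i = -1") (auto simp: blk_pos_def)
  ultimately show ?thesis using False by (simp add: blk_pos_def)
qed

context
  fixes W :: "int \<Rightarrow> nat"
  assumes W_pos: "\<And>i. 1 \<le> W i"
begin

lemma blk_pos_less: "blk_pos W i < blk_pos W (i + 1)"
  using blk_pos_succ[of W i] W_pos[of i] by simp

lemma strict_mono_blk_pos: "strict_mono (blk_pos W)"
  by (rule strict_mono_int_succ) (rule blk_pos_less)

lemma blk_pos_cover: "\<exists>i. blk_pos W i \<le> p \<and> p < blk_pos W (i + 1)"
proof (induct p rule: int_induct[where k=0])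
  case base then show ?case using blk_pos_less[of 0] by (intro exI[of _ 0]) simp
next
  case (step1 p)
  then obtain i where i: "blk_pos W i \<le> p" "p < blk_pos W (i + 1)" by blast
  then show ?case using blk_pos_less[of "i + 1"]
    by (cases "p + 1 < blk_pos W (i + 1)") (auto intro: exI[of _ i] exI[of _ "i + 1"])
next
  case (step2 p)
  then obtain i where i: "blk_pos W i \<le> p" "p < blk_pos W (i + 1)" by blast
  then show ?case using blk_pos_less[of "i - 1"]
    by (cases "blk_pos W i \<le> p - 1") (auto intro: exI[of _ i] exI[of _ "i - 1"])
qed

lemma blk_pos_unique:
  assumes "blk_pos W i \<le> p" "p < blk_pos W (i + 1)" "blk_pos W j \<le> p" "p < blk_pos W (j + 1)"
  shows "i = j"
  using assms strict_mono_less_eq[OF strict_mono_blk_pos, of "i + 1" j]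
    strict_mono_less_eq[OF strict_mono_blk_pos, of "j + 1" i] by linarith

lemma blk_index_eq:
  assumes "blk_pos W i \<le> p" "p < blk_pos W (i + 1)"
  shows "blk_index W p = i"
  unfolding blk_index_def using assms blk_pos_unique by blast

end

lemma zero_in_range_blk_pos: "0 \<in> range (blk_pos W)"
  using rangeI[of "blk_pos W" 0] by simp

lemma blk_pos_add_in_range:
  assumes "\<And>i. 1 \<le> W i" "0 \<le> d" "d < int (W i)"
  shows "blk_pos W i + d \<in> range (blk_pos W) \<longleftrightarrow> d = 0"
proof
  assume "blk_pos W i + d \<in> range (blk_pos W)"
  then obtain i' where i': "blk_pos W i' = blk_pos W i + d" by auto
  have "i' = i"
    using blk_pos_unique[of W, OF assms(1), of i' "blk_pos W i + d" i] i' assms(2,3)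
      blk_pos_less[of W, OF assms(1), of i'] blk_pos_succ[of W i] by simp
  then show "d = 0" using i' by simp
qed auto

lemma blk_pos_range_gap:
  assumes "\<And>i. 1 \<le> W i" "q \<in> range (blk_pos W)"
  shows "\<not> (0 < q \<and> q < int (W 0))"
proof
  assume q: "0 < q \<and> q < int (W 0)"
  obtain i where i: "q = blk_pos W i" using assms(2) by blast
  have "blk_pos W 0 < blk_pos W i" "blk_pos W i < blk_pos W 1" using q i blk_pos_succ[of W 0] by simp_all
  then have "0 < i" "i < 1" using strict_mono_less[OF strict_mono_blk_pos[of W, OF assms(1)]] by blast+
  then show False by simp
qed

lemma blk_pos_eq_diff:
  assumes "\<And>i. int (W i) = f (i + 1) - f i"
  shows "blk_pos W i = f i - f 0"
proof (induct i rule: int_induct[where k=0])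
  case (step1 i) then show ?case using blk_pos_succ[of W i] assms[of i] by simp
next
  case (step2 i) then show ?case using blk_pos_succ[of W "i - 1"] assms[of "i - 1"] by simp
qed simp

lemma subst_cfg_eval:
  fixes \<omega> :: "'a \<Rightarrow> 'b word2" and x :: "int \<times> int \<Rightarrow> 'a"
  defines "W \<equiv> (\<lambda>i. fst (wsize (\<omega> (x (i, 0)))))" and "H \<equiv> (\<lambda>j. snd (wsize (\<omega> (x (0, j)))))"
  assumes "\<And>i. 1 \<le> W i" and "\<And>j. 1 \<le> H j"
    and "blk_pos W i \<le> p1" "p1 < blk_pos W (i + 1)" "blk_pos H j \<le> p2" "p2 < blk_pos H (j + 1)"
  shows "subst_cfg \<omega> x (p1, p2) = wcont (\<omega> (x (i, j))) (nat (p1 - blk_pos W i), nat (p2 - blk_pos H j))"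
  using assms blk_index_eq[of W i p1] blk_index_eq[of H j p2]
  unfolding subst_cfg_def W_def H_def by (simp add: Let_def)

lemma subst_word_size:
  assumes "0 < fst (wsize u)" "0 < snd (wsize u)"
  shows "wsize (subst_word \<omega> u) = ((\<Sum>k<fst (wsize u). fst (wsize (\<omega> (wcont u (k, 0))))),
                                     (\<Sum>k<snd (wsize u). snd (wsize (\<omega> (wcont u (0, k))))))"
  using assms unfolding subst_word_def by (simp add: Let_def wsize_def)

lemma subst_word_origin:
  assumes "0 < fst (wsize u)" "0 < snd (wsize u)"
    and "\<And>a. 0 < fst (wsize (\<omega> a))" "\<And>a. 0 < snd (wsize (\<omega> a))"
  shows "wcont (subst_word \<omega> u) (0, 0) = wcont (\<omega> (wcont u (0, 0))) (0, 0)"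
  using assms unfolding subst_word_def by (simp add: Let_def wcont_def Least_eq_0)

lemma sum_ge_first:
  fixes f :: "nat \<Rightarrow> nat"
  assumes "\<And>i. 1 \<le> f i" "0 < A"
  shows "f 0 + (A - 1) \<le> (\<Sum>i<A. f i)"
proof -
  have "(\<Sum>i<A. f i) = f 0 + (\<Sum>i\<in>{1..<A}. f i)"
    using assms(2) by (simp add: sum.atLeast_Suc_lessThan lessThan_atLeast0)
  moreover have "(\<Sum>i\<in>{1..<A}. 1) \<le> (\<Sum>i\<in>{1..<A}. f i)"
    by (rule sum_mono) (use assms in auto)
  ultimately show ?thesis by simp
qed

lemma subst_word_size_ge:
  assumes "0 < fst (wsize u)" "0 < snd (wsize u)"
    and "\<And>a. 0 < fst (wsize (\<omega> a))" "\<And>a. 0 < snd (wsize (\<omega> a))"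
  shows "fst (wsize (\<omega> (wcont u (0, 0)))) + (fst (wsize u) - 1) \<le> fst (wsize (subst_word \<omega> u))"
    and "snd (wsize (\<omega> (wcont u (0, 0)))) + (snd (wsize u) - 1) \<le> snd (wsize (subst_word \<omega> u))"
  using sum_ge_first[of "\<lambda>k. fst (wsize (\<omega> (wcont u (k, 0))))" "fst (wsize u)"]
    sum_ge_first[of "\<lambda>k. snd (wsize (\<omega> (wcont u (0, k))))" "snd (wsize u)"]
    subst_word_size[OF assms(1,2), of \<omega>] assms by (simp_all add: Suc_le_eq)

text \<open>In the notation of the paper, \<open>wtile i j\<close> are the tiles of \<open>W\<^sub>n\<close>, \<open>htile n 0 0 i = b\<^sub>n\<^sup>i\<close>,
  \<open>htile n 0 1 i = g\<^sub>n\<^sup>i\<close>, \<open>htile n 1 1 i = y\<^sub>n\<^sup>i\<close>, and \<open>vtile n b0 b1 i = hat (htile n b0 b1 i)\<close>.\<close>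

definition wtile :: "int \<Rightarrow> int \<Rightarrow> tile" where
  "wtile i j = ((1,1,i+1),(1,1,j+1),(1,1,i),(1,1,j))"
definition htile :: "nat \<Rightarrow> int \<Rightarrow> int \<Rightarrow> int \<Rightarrow> tile" where
  "htile n b0 b1 c = ((0,b1,c+1),(1,1,1+b0),(0,b0,c),(1,1,int n+b1))"
definition vtile :: "nat \<Rightarrow> int \<Rightarrow> int \<Rightarrow> int \<Rightarrow> tile" where
  "vtile n b0 b1 c = ((1,1,1+b0),(0,b1,c+1),(1,1,int n+b1),(0,b0,c))"

definition path_tile_ok :: "bool \<Rightarrow> nat \<Rightarrow> int \<Rightarrow> int \<Rightarrow> int \<Rightarrow> bool" where
  "path_tile_ok e n b0 b1 c \<longleftrightarrow>
     (b0 = 0 \<and> b1 = 0 \<and> 0 \<le> c \<and> c \<le> int n - 1) \<or>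
     (b0 = 0 \<and> b1 = 1 \<and> 0 \<le> c \<and> c \<le> int n) \<or>
     (b0 = 1 \<and> b1 = 1 \<and> 1 \<le> c \<and> c \<le> int n) \<or>
     (e \<and> b0 = 1 \<and> b1 = 0 \<and> 1 \<le> c \<and> c \<le> int n - 1)"

definition bit_pairs :: "(int \<times> int) set" where "bit_pairs = {(0,0),(0,1),(1,1)}"

definition junction_ok :: "bool \<Rightarrow> int \<Rightarrow> int \<Rightarrow> int \<Rightarrow> int \<Rightarrow> bool" where
  "junction_ok e k l r s \<longleftrightarrow> (k,l) \<in> bit_pairs \<and> (r,s) \<in> bit_pairs \<and>
     (e \<or> ((k,l,r,s) \<noteq> (0,0,1,1) \<and> (k,l,r,s) \<noteq> (1,1,0,0)))"

text \<open>\<open>tiles False n\<close> is \<open>T\<^sub>n\<close> (lemma \<open>Tset_eq_tiles\<close>). \<open>tiles True n\<close> also contains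
  \<open>htile n 1 0 c\<close>, \<open>vtile n 1 0 c\<close> and the junctions \<open>0011\<close> and \<open>1100\<close>: decoding a block only yields a tile of this
  larger set, and these extra tiles turn out never to occur in a valid tiling.\<close>

definition tiles :: "bool \<Rightarrow> nat \<Rightarrow> tile set" where
  "tiles e n = {wtile i j | i j. 1 \<le> i \<and> i \<le> int n \<and> 1 \<le> j \<and> j \<le> int n}
     \<union> {htile n b0 b1 c | b0 b1 c. path_tile_ok e n b0 b1 c}
     \<union> {vtile n b0 b1 c | b0 b1 c. path_tile_ok e n b0 b1 c}
     \<union> {junction n k l r s | k l r s. junction_ok e k l r s}"

lemma hat_wtile[simp]: "hat (wtile i j) = wtile j i" by (simp add: hat_def wtile_def)
lemma hat_htile[simp]: "hat (htile n b0 b1 c) = vtile n b0 b1 c" by (simp add: hat_def htile_def vtile_def)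
lemma hat_vtile[simp]: "hat (vtile n b0 b1 c) = htile n b0 b1 c" by (simp add: hat_def htile_def vtile_def)
lemma hat_junction[simp]: "hat (junction n k l r s) = junction n r s k l"
  by (simp add: hat_def junction_def)
lemma hat_hat[simp]: "hat (hat t) = t" by (cases t) (auto simp: hat_def)

lemma wtile_in_tiles: "1 \<le> i \<Longrightarrow> i \<le> int n \<Longrightarrow> 1 \<le> j \<Longrightarrow> j \<le> int n \<Longrightarrow> wtile i j \<in> tiles e n"
  unfolding tiles_def by blast
lemma htile_in_tiles: "path_tile_ok e n b0 b1 c \<Longrightarrow> htile n b0 b1 c \<in> tiles e n"
  unfolding tiles_def by blast
lemma vtile_in_tiles: "path_tile_ok e n b0 b1 c \<Longrightarrow> vtile n b0 b1 c \<in> tiles e n"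
  unfolding tiles_def by blast
lemma junction_in_tiles: "junction_ok e k l r s \<Longrightarrow> junction n k l r s \<in> tiles e n"
  unfolding tiles_def by blast

lemma tiles_cases:
  assumes "t \<in> tiles e n"
  obtains (wtile) i j where "t = wtile i j" "1 \<le> i" "i \<le> int n" "1 \<le> j" "j \<le> int n"
  | (htile) b0 b1 c where "t = htile n b0 b1 c" "path_tile_ok e n b0 b1 c"
  | (vtile) b0 b1 c where "t = vtile n b0 b1 c" "path_tile_ok e n b0 b1 c"
  | (junction) k l r s where "t = junction n k l r s" "junction_ok e k l r s"
  using assms unfolding tiles_def by blast

lemma junction_ok_swap: "junction_ok e k l r s \<Longrightarrow> junction_ok e r s k l"
  unfolding junction_ok_def by auto

lemma hat_in_tiles: "t \<in> tiles e n \<Longrightarrow> hat t \<in> tiles e n"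
  by (erule tiles_cases) (auto intro: wtile_in_tiles htile_in_tiles vtile_in_tiles junction_in_tiles junction_ok_swap)

definition lkind :: "label \<Rightarrow> int" where "lkind l = fst l"
definition lbit :: "label \<Rightarrow> int" where "lbit l = fst (snd l)"
definition lcount :: "label \<Rightarrow> int" where "lcount l = snd (snd l)"

lemma LEFT_simps[simp]:
  "LEFT (wtile i j) = (1,1,i)" "LEFT (htile n b0 b1 c) = (0,b0,c)" "LEFT (vtile n b0 b1 c) = (1,1,int n+b1)"
  "LEFT (junction n k l r s) = (0,s,r+int n)"
  by (simp_all add: LEFT_def wtile_def htile_def vtile_def junction_def)
lemma RIGHT_simps[simp]:
  "RIGHT (wtile i j) = (1,1,i+1)" "RIGHT (htile n b0 b1 c) = (0,b1,c+1)" "RIGHT (vtile n b0 b1 c) = (1,1,1+b0)"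
  "RIGHT (junction n k l r s) = (0,k,l)"
  by (simp_all add: RIGHT_def wtile_def htile_def vtile_def junction_def)
lemma TOP_simps[simp]:
  "TOP (wtile i j) = (1,1,j+1)" "TOP (htile n b0 b1 c) = (1,1,1+b0)" "TOP (vtile n b0 b1 c) = (0,b1,c+1)"
  "TOP (junction n k l r s) = (0,r,s)"
  by (simp_all add: TOP_def wtile_def htile_def vtile_def junction_def)
lemma BOTTOM_simps[simp]:
  "BOTTOM (wtile i j) = (1,1,j)" "BOTTOM (htile n b0 b1 c) = (1,1,int n+b1)" "BOTTOM (vtile n b0 b1 c) = (0,b0,c)"
  "BOTTOM (junction n k l r s) = (0,l,k+int n)"
  by (simp_all add: BOTTOM_def wtile_def htile_def vtile_def junction_def)

lemma hat_sides[simp]: "LEFT (hat t) = BOTTOM t" "RIGHT (hat t) = TOP t"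
  "TOP (hat t) = RIGHT t" "BOTTOM (hat t) = LEFT t"
  by (cases t; auto simp: hat_def LEFT_def RIGHT_def TOP_def BOTTOM_def)+

lemma tiles_lkind:
  assumes "t \<in> tiles e n"
  shows "lkind (LEFT t) = lkind (RIGHT t)" "lkind (TOP t) = lkind (BOTTOM t)"
    "lkind (LEFT t) = 0 \<or> lkind (LEFT t) = 1" "lkind (BOTTOM t) = 0 \<or> lkind (BOTTOM t) = 1"
  using assms by (cases rule: tiles_cases; simp add: lkind_def)+

lemma htiles_False:
  "{htile n b0 b1 c | b0 b1 c. path_tile_ok False n b0 b1 c} = Bset n \<union> Gset n \<union> Yset n"
  unfolding Bset_def Gset_def Yset_def path_tile_ok_def htile_def by auto
lemma vtiles_False:
  "{vtile n b0 b1 c | b0 b1 c. path_tile_ok False n b0 b1 c} = hat ` (Bset n \<union> Gset n \<union> Yset n)"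
proof -
  have "hat ` {htile n b0 b1 c | b0 b1 c. path_tile_ok False n b0 b1 c}
      = {hat (htile n b0 b1 c) | b0 b1 c. path_tile_ok False n b0 b1 c}" by blast
  then show ?thesis by (simp add: htiles_False)
qed

lemma Tset_eq_tiles: "Tset n = tiles False n"
proof -
  have "Wset n = {wtile i j | i j. 1 \<le> i \<and> i \<le> int n \<and> 1 \<le> j \<and> j \<le> int n}"
    unfolding Wset_def wtile_def by auto
  moreover have "Jset n = {junction n k l r s | k l r s. junction_ok False k l r s}"
    unfolding Jset_def junction_ok_def bit_pairs_def by auto
  ultimately show ?thesis
    unfolding Tset_def tiles_def htiles_False vtiles_False image_Un by (simp add: Un_ac)
qed

lemma Omega_iff: "x \<in> Omega n \<longleftrightarrow> valid (tiles False n) x"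
  by (simp add: Omega_def Tset_eq_tiles)

lemma path_tile_ok_bounds:
  "path_tile_ok e n b0 b1 c \<Longrightarrow> 0 \<le> b0 \<and> b0 \<le> 1 \<and> 0 \<le> b1 \<and> b1 \<le> 1 \<and> 0 \<le> c \<and> c \<le> int n"
  unfolding path_tile_ok_def by auto

lemma junction_ok_bounds:
  "junction_ok e k l r s \<Longrightarrow> 0 \<le> k \<and> k \<le> l \<and> l \<le> 1 \<and> 0 \<le> r \<and> r \<le> s \<and> s \<le> 1"
  unfolding junction_ok_def bit_pairs_def by auto

definition transpose_cfg :: "(int \<times> int \<Rightarrow> tile) \<Rightarrow> (int \<times> int \<Rightarrow> tile)" where
  "transpose_cfg y = (\<lambda>p. hat (y (snd p, fst p)))"

lemma transpose_apply[simp]: "transpose_cfg y (a, b) = hat (y (b, a))" by (simp add: transpose_cfg_def)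

lemma transpose_transpose[simp]: "transpose_cfg (transpose_cfg y) = y" by (rule ext) (simp add: transpose_cfg_def)

lemma valid_transpose: "valid (tiles e n) y \<Longrightarrow> valid (tiles e n) (transpose_cfg y)"
  unfolding valid_def by (auto intro: hat_in_tiles)

section \<open>Rows and columns of a valid tiling\<close>

definition row_kind :: "(int \<times> int \<Rightarrow> tile) \<Rightarrow> int \<Rightarrow> int" where
  "row_kind y r = lkind (LEFT (y (0, r)))"
definition col_kind :: "(int \<times> int \<Rightarrow> tile) \<Rightarrow> int \<Rightarrow> int" where
  "col_kind y c = lkind (BOTTOM (y (c, 0)))"

lemma col_kind_transpose: "col_kind y c = row_kind (transpose_cfg y) c"
  by (simp add: col_kind_def row_kind_def)

text \<open>Rows and columns of kind 0 consist of junctions and path tiles; they cut a tiling into the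
  blocks that are the images of single tiles. \<open>row0 y\<close> and \<open>col0 y\<close> enumerate them in increasing order.\<close>

definition row0 :: "(int \<times> int \<Rightarrow> tile) \<Rightarrow> int \<Rightarrow> int" where
  "row0 y = enum_in (\<lambda>r. row_kind y r = 0)"
definition col0 :: "(int \<times> int \<Rightarrow> tile) \<Rightarrow> int \<Rightarrow> int" where
  "col0 y = row0 (transpose_cfg y)"

locale tiling =
  fixes n :: nat and e :: bool and y :: "int \<times> int \<Rightarrow> tile"
  assumes valid_y: "valid (tiles e n) y" and n_ge_1: "1 \<le> n"
begin

lemma tile_in: "y m \<in> tiles e n" using valid_y unfolding valid_def by blast
lemma match_h: "LEFT (y (a + 1, b)) = RIGHT (y (a, b))" using valid_y unfolding valid_def by metis
lemma match_v: "BOTTOM (y (a, b + 1)) = TOP (y (a, b))" using valid_y unfolding valid_def by metis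

lemma tiling_transpose: "tiling n e (transpose_cfg y)"
  using valid_transpose[OF valid_y] n_ge_1 by unfold_locales

lemma row_kind_const: "lkind (LEFT (y (c, r))) = row_kind y r"
  using int_shift_invariant_const[of "\<lambda>c. lkind (LEFT (y (c, r)))"]
    match_h tiles_lkind(1)[OF tile_in] unfolding row_kind_def by metis

lemma row_kind_01: "row_kind y r = 0 \<or> row_kind y r = 1"
  using row_kind_const[of 0 r] tiles_lkind(3)[OF tile_in[of "(0,r)"]] by simp

lemma col_kind_const: "lkind (BOTTOM (y (c, r))) = col_kind y c"
proof -
  interpret T: tiling n e "transpose_cfg y" by (rule tiling_transpose)
  show ?thesis using T.row_kind_const[of r c] by (simp add: col_kind_transpose)
qed

lemma col_kind_01: "col_kind y c = 0 \<or> col_kind y c = 1"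
  using row_kind_01 tiling.row_kind_01[OF tiling_transpose] by (simp add: col_kind_transpose)

lemma wtile_at:
  assumes "row_kind y r = 1" "col_kind y c = 1"
  obtains i j where "y (c,r) = wtile i j" "1 \<le> i" "i \<le> int n" "1 \<le> j" "j \<le> int n"
  using tile_in[of "(c,r)"] row_kind_const[of c r] col_kind_const[of c r] assms
  by (cases rule: tiles_cases) (auto simp: lkind_def)

lemma htile_at:
  assumes "row_kind y r = 0" "col_kind y c = 1"
  obtains b0 b1 cc where "y (c,r) = htile n b0 b1 cc" "path_tile_ok e n b0 b1 cc"
  using tile_in[of "(c,r)"] row_kind_const[of c r] col_kind_const[of c r] assms
  by (cases rule: tiles_cases) (auto simp: lkind_def)

lemma vtile_at:
  assumes "row_kind y r = 1" "col_kind y c = 0"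
  obtains b0 b1 cc where "y (c,r) = vtile n b0 b1 cc" "path_tile_ok e n b0 b1 cc"
  using tile_in[of "(c,r)"] row_kind_const[of c r] col_kind_const[of c r] assms
  by (cases rule: tiles_cases) (auto simp: lkind_def)

lemma junction_at:
  assumes "row_kind y r = 0" "col_kind y c = 0"
  obtains k l rr s where "y (c,r) = junction n k l rr s" "junction_ok e k l rr s"
  using tile_in[of "(c,r)"] row_kind_const[of c r] col_kind_const[of c r] assms
  by (cases rule: tiles_cases) (auto simp: lkind_def)

lemma row1_tile_count:
  assumes "row_kind y r = 1"
  shows "lcount (TOP (y (c,r))) = lcount (BOTTOM (y (c,r))) + 1"
    "0 \<le> lcount (BOTTOM (y (c,r)))" "lcount (BOTTOM (y (c,r))) \<le> int n"
  using tile_in[of "(c,r)"] row_kind_const[of c r] assms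
  by (cases rule: tiles_cases; auto simp: lkind_def lcount_def path_tile_ok_def)+

lemma TOP_count_nonneg: "0 \<le> lcount (TOP (y (c,r)))"
  using tile_in[of "(c,r)"]
  by (cases rule: tiles_cases) (auto simp: lcount_def path_tile_ok_def junction_ok_def bit_pairs_def)

lemma TOP_count_run:
  assumes "\<And>d. 1 \<le> d \<Longrightarrow> d \<le> int m \<Longrightarrow> row_kind y (r + d) = 1"
  shows "lcount (TOP (y (c, r + int m))) = lcount (TOP (y (c, r))) + int m"
  using assms
proof (induct m)
  case (Suc m)
  have row1: "row_kind y (r + int m + 1) = 1" using Suc.prems[of "int m + 1"] by (simp add: add.assoc)
  have "lcount (TOP (y (c, r + int m + 1))) = lcount (BOTTOM (y (c, r + int m + 1))) + 1"
    by (rule row1_tile_count(1)[OF row1])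
  also have "BOTTOM (y (c, r + int m + 1)) = TOP (y (c, r + int m))" by (rule match_v)
  finally show ?case using Suc by (simp add: algebra_simps)
qed simp

lemma row1_run_bound:
  assumes "\<And>d. 1 \<le> d \<Longrightarrow> d \<le> int m \<Longrightarrow> row_kind y (r + d) = 1"
  shows "int m \<le> int n + 1"
proof (cases m)
  case (Suc k)
  have "lcount (TOP (y (c, r + int k))) = lcount (TOP (y (c, r))) + int k"
    by (rule TOP_count_run) (use assms Suc in auto)
  moreover have "row_kind y (r + int k + 1) = 1" using assms[of "int k + 1"] Suc by (simp add: add.assoc)
  then have "lcount (BOTTOM (y (c, r + int k + 1))) \<le> int n" by (rule row1_tile_count(3))
  moreover have "BOTTOM (y (c, r + int k + 1)) = TOP (y (c, r + int k))" by (rule match_v)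
  ultimately show ?thesis using TOP_count_nonneg[of c r] Suc by simp
qed simp

lemma row0_above: "\<exists>d. 1 \<le> d \<and> d \<le> int n + 2 \<and> row_kind y (r + d) = 0"
proof (rule ccontr)
  assume "\<not> ?thesis"
  then have "\<And>d. 1 \<le> d \<Longrightarrow> d \<le> int (n + 2) \<Longrightarrow> row_kind y (r + d) = 1"
    using row_kind_01 by fastforce
  from row1_run_bound[of "n + 2", OF this] show False by simp
qed

lemma row0_below: "\<exists>d. 1 \<le> d \<and> row_kind y (r - d) = 0"
proof -
  obtain d where "1 \<le> d" "d \<le> int n + 2" "row_kind y (r - int n - 3 + d) = 0"
    using row0_above[of "r - int n - 3"] by blast
  then show ?thesis by (intro exI[of _ "int n + 3 - d"]) (auto simp: algebra_simps)
qed

lemma rows0_unbounded: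
  "\<And>r. \<exists>d. 1 \<le> d \<and> row_kind y (r + d) = 0" "\<And>r. \<exists>d. 1 \<le> d \<and> row_kind y (r - d) = 0"
  using row0_above row0_below by blast+

lemma row0_kind: "row_kind y (row0 y j) = 0"
  using enum_in_mem[OF rows0_unbounded] unfolding row0_def .

lemma row0_less: "row0 y j < row0 y (j + 1)"
  using enum_in_less[OF rows0_unbounded] unfolding row0_def .

lemma between_row0: "row0 y j < \<rho> \<Longrightarrow> \<rho> < row0 y (j + 1) \<Longrightarrow> row_kind y \<rho> = 1"
  using between_enum_in[OF rows0_unbounded, of j \<rho>] row_kind_01[of \<rho>] unfolding row0_def by auto

lemma row0_before:
  obtains r' where "r' < r" "row_kind y r' = 0" "\<And>\<rho>. r' < \<rho> \<Longrightarrow> \<rho> < r \<Longrightarrow> row_kind y \<rho> = 1"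
proof
  let ?P = "\<lambda>r. row_kind y r = 0"
  show "prev_in ?P r < r" "?P (prev_in ?P r)" using prev_in_props[OF rows0_unbounded] by blast+
  show "row_kind y \<rho> = 1" if "prev_in ?P r < \<rho>" "\<rho> < r" for \<rho>
    using prev_in_props(3)[OF rows0_unbounded that] row_kind_01[of \<rho>] by auto
qed

lemma count_across_rows1:
  assumes "0 \<le> L" "\<And>\<rho>. r < \<rho> \<Longrightarrow> \<rho> \<le> r + L \<Longrightarrow> row_kind y \<rho> = 1"
  shows "lcount (BOTTOM (y (c, r + L + 1))) = lcount (TOP (y (c, r))) + L"
proof -
  have "lcount (TOP (y (c, r + int (nat L)))) = lcount (TOP (y (c, r))) + int (nat L)"
    by (rule TOP_count_run) (use assms in auto)
  then show ?thesis using match_v[of c "r + L"] assms(1) by simp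
qed

lemma col1_tile_count:
  assumes "col_kind y c = 1"
  shows "lcount (RIGHT (y (c,r))) = lcount (LEFT (y (c,r))) + 1"
    "0 \<le> lcount (LEFT (y (c,r)))" "lcount (LEFT (y (c,r))) \<le> int n"
  using tiling.row1_tile_count[OF tiling_transpose, of c r] assms
  by (auto simp: col_kind_transpose)

lemma RIGHT_count_run:
  assumes "\<And>d. 1 \<le> d \<Longrightarrow> d \<le> int m \<Longrightarrow> col_kind y (c + d) = 1"
  shows "lcount (RIGHT (y (c + int m, r))) = lcount (RIGHT (y (c, r))) + int m"
  using tiling.TOP_count_run[OF tiling_transpose, of m c r] assms by (simp add: col_kind_transpose)

lemma col0_left: "\<exists>d. 1 \<le> d \<and> col_kind y (c - d) = 0"
  using tiling.row0_below[OF tiling_transpose, of c] by (simp add: col_kind_transpose)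

lemma col0_kind: "col_kind y (col0 y i) = 0"
  using tiling.row0_kind[OF tiling_transpose] by (simp add: col_kind_transpose col0_def)

lemma between_col0: "col0 y i < c \<Longrightarrow> c < col0 y (i + 1) \<Longrightarrow> col_kind y c = 1"
  using tiling.between_row0[OF tiling_transpose] by (simp add: col_kind_transpose col0_def)

lemma col0_after:
  obtains c' where "c < c'" "col_kind y c' = 0" "\<And>\<gamma>. c < \<gamma> \<Longrightarrow> \<gamma> < c' \<Longrightarrow> col_kind y \<gamma> = 1"
proof -
  interpret T: tiling n e "transpose_cfg y" by (rule tiling_transpose)
  let ?P = "\<lambda>c. col_kind y c = 0"
  have "?P = (\<lambda>c. row_kind (transpose_cfg y) c = 0)" by (simp add: col_kind_transpose)
  then have props: "c < next_in ?P c" "?P (next_in ?P c)" "\<And>\<gamma>. c < \<gamma> \<Longrightarrow> \<gamma> < next_in ?P c \<Longrightarrow> \<not> ?P \<gamma>"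
    using next_in_props[OF T.rows0_unbounded] by metis+
  show ?thesis by (rule that[OF props(1,2)]) (use props(3) col_kind_01 in blast)
qed

lemma count_across_cols1:
  assumes "0 \<le> L" "\<And>\<gamma>. c < \<gamma> \<Longrightarrow> \<gamma> \<le> c + L \<Longrightarrow> col_kind y \<gamma> = 1"
  shows "lcount (LEFT (y (c + L + 1, r))) = lcount (RIGHT (y (c, r))) + L"
  using tiling.count_across_rows1[OF tiling_transpose, of L c r] assms by (simp add: col_kind_transpose)

lemma n_eq_1_if_no_col1:
  assumes no_col1: "\<And>c. col_kind y c = 0"
  shows "n = 1"
proof (rule ccontr)
  assume "n \<noteq> 1"
  obtain r where r: "row_kind y r = 0" using row0_above by blast
  obtain k l rr s where J1: "y (0, r) = junction n k l rr s" "junction_ok e k l rr s"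
    using junction_at[OF r no_col1] by blast
  obtain k' l' rr' s' where J2: "y (1, r) = junction n k' l' rr' s'" "junction_ok e k' l' rr' s'"
    using junction_at[OF r no_col1] by blast
  have "LEFT (y (0 + 1, r)) = RIGHT (y (0, r))" by (rule match_h)
  then have "l = rr' + int n" using J1 J2 by simp
  then show False
    using junction_ok_bounds[OF J1(2)] junction_ok_bounds[OF J2(2)] n_ge_1 \<open>n \<noteq> 1\<close> by linarith
qed

lemma junction_row_bits_if_no_col1:
  assumes no_col1: "\<And>c. col_kind y c = 0" and row0: "row_kind y \<rho> = 0"
  shows "lbit (TOP (y (c, \<rho>))) = 0 \<and> lbit (BOTTOM (y (c, \<rho>))) = 1"
proof -
  obtain k l rr s where J: "y (c, \<rho>) = junction n k l rr s" "junction_ok e k l rr s"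
    using junction_at[OF row0 no_col1] by blast
  obtain k' l' rr' s' where J_right: "y (c + 1, \<rho>) = junction n k' l' rr' s'" "junction_ok e k' l' rr' s'"
    using junction_at[OF row0 no_col1] by blast
  obtain k'' l'' rr'' s'' where J_left: "y (c - 1, \<rho>) = junction n k'' l'' rr'' s''" "junction_ok e k'' l'' rr'' s''"
    using junction_at[OF row0 no_col1] by blast
  have "LEFT (y (c + 1, \<rho>)) = RIGHT (y (c, \<rho>))" "LEFT (y (c - 1 + 1, \<rho>)) = RIGHT (y (c - 1, \<rho>))"
    by (rule match_h)+
  then have "l = rr' + 1" "l'' = rr + 1" using J J_right J_left n_eq_1_if_no_col1[OF no_col1] by simp_all
  then have "rr = 0" "l = 1"
    using junction_ok_bounds[OF J(2)] junction_ok_bounds[OF J_right(2)] junction_ok_bounds[OF J_left(2)]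
    by linarith+
  then show ?thesis using J by (simp add: lbit_def)
qed

lemma vtile_row_if_no_col1:
  assumes no_col1: "\<And>c. col_kind y c = 0" and row1: "row_kind y \<rho> = 1"
    and bits0: "\<And>c. lbit (BOTTOM (y (c, \<rho>))) = 0"
  shows "lbit (TOP (y (c, \<rho>))) = 0 \<and> lcount (BOTTOM (y (c, \<rho>))) = 0"
proof -
  obtain b0 b1 cc where V: "y (c, \<rho>) = vtile n b0 b1 cc" "path_tile_ok e n b0 b1 cc"
    using vtile_at[OF row1 no_col1] by blast
  obtain b0' b1' cc' where V_left: "y (c - 1, \<rho>) = vtile n b0' b1' cc'" "path_tile_ok e n b0' b1' cc'"
    using vtile_at[OF row1 no_col1] by blast
  have "LEFT (y (c - 1 + 1, \<rho>)) = RIGHT (y (c - 1, \<rho>))" by (rule match_h)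
  then have "b1 = b0'" using V V_left n_eq_1_if_no_col1[OF no_col1] by simp
  moreover have "b0 = 0" "b0' = 0" using bits0[of c] bits0[of "c - 1"] V V_left by (simp_all add: lbit_def)
  ultimately have "b1 = 0" "cc = 0"
    using V(2) n_eq_1_if_no_col1[OF no_col1] unfolding path_tile_ok_def by auto
  then show ?thesis using V by (simp add: lbit_def lcount_def)
qed

text \<open>Without columns of kind 1, the row above a row of kind 0 has kind 1, bit 0 and counter 1
  on its top labels; no row of either kind fits above it.\<close>

lemma col1_exists: "\<exists>c. col_kind y c = 1"
proof (rule ccontr)
  assume "\<not> ?thesis"
  then have no_col1: "\<And>c. col_kind y c = 0" using col_kind_01 by blast
  note bits0 = junction_row_bits_if_no_col1[OF no_col1] and bits1 = vtile_row_if_no_col1[OF no_col1]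
  obtain r where r: "row_kind y r = 0" using row0_above by blast
  have row1: "row_kind y (r + 1) = 1"
    using bits0[OF r, of 0] bits0[of "r + 1" 0] match_v[of 0 r] row_kind_01[of "r + 1"] by auto
  have "lbit (BOTTOM (y (c, r + 1))) = 0" for c using bits0[OF r, of c] match_v[of c r] by simp
  then have top: "lbit (TOP (y (c, r + 1))) = 0 \<and> lcount (TOP (y (c, r + 1))) = 1" for c
    using bits1[OF row1, of c] row1_tile_count(1)[OF row1, of c] by simp
  have match: "BOTTOM (y (c, r + 1 + 1)) = TOP (y (c, r + 1))" for c by (rule match_v)
  show False
  proof (cases "row_kind y (r + 1 + 1) = 0")
    case True then show ?thesis using bits0[OF True, of 0] top[of 0] match[of 0] by simp
  next
    case False
    then have "row_kind y (r + 1 + 1) = 1" using row_kind_01 by blast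
    from bits1[OF this] show ?thesis using top match by (metis lbit_def lcount_def zero_neq_one)
  qed
qed

lemma col0_exists: "\<exists>c. col_kind y c = 0"
  using tiling.row0_above[OF tiling_transpose] by (auto simp: col_kind_transpose)

text \<open>The counter of a vertical path crossing the rows of kind 1 between two consecutive rows
  of kind 0 runs from \<open>1 + b\<close> to \<open>n + b'\<close> on a column of kind 1, and from \<open>s\<close> to \<open>k + n\<close> on a
  column of kind 0; the bit constraints leave only gaps \<open>n - 1\<close> and \<open>n\<close>.\<close>

lemma row0_gap:
  assumes "row_kind y r = 0" "row_kind y r' = 0" "r < r'"
    and between: "\<And>\<rho>. r < \<rho> \<Longrightarrow> \<rho> < r' \<Longrightarrow> row_kind y \<rho> = 1"
  shows "r' - r - 1 = int n - 1 \<or> r' - r - 1 = int n"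
proof -
  have count: "lcount (BOTTOM (y (c, r'))) = lcount (TOP (y (c, r))) + (r' - r - 1)" for c
    using count_across_rows1[of "r' - r - 1" r c] assms by simp
  obtain c1 where c1: "col_kind y c1 = 1" using col1_exists by blast
  obtain c0 where c0: "col_kind y c0 = 0" using col0_exists by blast
  obtain b0 b1 cc where H: "y (c1, r) = htile n b0 b1 cc" "path_tile_ok e n b0 b1 cc"
    using htile_at[OF assms(1) c1] by blast
  obtain b0' b1' cc' where H': "y (c1, r') = htile n b0' b1' cc'" "path_tile_ok e n b0' b1' cc'"
    using htile_at[OF assms(2) c1] by blast
  obtain k l rr s where J: "y (c0, r) = junction n k l rr s" "junction_ok e k l rr s"
    using junction_at[OF assms(1) c0] by blast
  obtain k' l' rr' s' where J': "y (c0, r') = junction n k' l' rr' s'" "junction_ok e k' l' rr' s'"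
    using junction_at[OF assms(2) c0] by blast
  have "int n + b1' = 1 + b0 + (r' - r - 1)" using count[of c1] H H' by (simp add: lcount_def)
  moreover have "k' + int n = s + (r' - r - 1)" using count[of c0] J J' by (simp add: lcount_def)
  ultimately show ?thesis
    using path_tile_ok_bounds[OF H(2)] path_tile_ok_bounds[OF H'(2)]
      junction_ok_bounds[OF J(2)] junction_ok_bounds[OF J'(2)] by linarith
qed

lemma row0_gap_succ: "row0 y (j + 1) - row0 y j - 1 = int n - 1 \<or> row0 y (j + 1) - row0 y j - 1 = int n"
  by (rule row0_gap) (use row0_kind row0_less between_row0 in auto)

end

section \<open>The tiles outside \<open>T\<^sub>n\<close> never occur\<close>

context tiling
begin

lemma cols1_right_of_junction_0011:
  assumes J: "y (c, r) = junction n 0 0 1 1" and "1 \<le> d" "d \<le> int n"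
  shows "col_kind y (c + d) = 1"
proof -
  obtain c' where c': "c < c'" "col_kind y c' = 0" "\<And>\<gamma>. c < \<gamma> \<Longrightarrow> \<gamma> < c' \<Longrightarrow> col_kind y \<gamma> = 1"
    by (rule col0_after[of c]) (rule that)
  have "row_kind y r = 0" using row_kind_const[of c r] J by (simp add: lkind_def)
  then obtain k l rr s where J': "y (c', r) = junction n k l rr s" "junction_ok e k l rr s"
    using junction_at c'(2) by blast
  have "lcount (LEFT (y (c + (c' - c - 1) + 1, r))) = lcount (RIGHT (y (c, r))) + (c' - c - 1)"
    by (rule count_across_cols1) (use c' in auto)
  then have "rr + int n = c' - c - 1" using J J' by (simp add: lcount_def)
  then show ?thesis using c'(3)[of "c + d"] junction_ok_bounds[OF J'(2)] assms(2,3) by linarith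
qed

text \<open>Above a junction \<open>0011\<close> sits either a vertical path tile, whose counter would have to
  exceed \<open>n\<close> after the \<open>n\<close> columns of kind 1 to its right, or (for \<open>n = 1\<close>) a junction
  whose right neighbour cannot match.\<close>

lemma no_junction_0011: "y (c, r) \<noteq> junction n 0 0 1 1"
proof
  assume J: "y (c, r) = junction n 0 0 1 1"
  have row0: "row_kind y r = 0" and col0: "col_kind y c = 0"
    using row_kind_const[of c r] col_kind_const[of c r] J by (auto simp: lkind_def)
  note cols1 = cols1_right_of_junction_0011[OF J]
  have match_up: "BOTTOM (y (c, r + 1)) = TOP (y (c, r))" by (rule match_v)
  show False
  proof (cases "row_kind y (r + 1) = 1")
    case True
    obtain b0 b1 cc where V: "y (c, r + 1) = vtile n b0 b1 cc" "path_tile_ok e n b0 b1 cc"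
      using vtile_at[OF True col0] by blast
    have "lcount (RIGHT (y (c + int n, r + 1))) = lcount (RIGHT (y (c, r + 1))) + int n"
      by (rule RIGHT_count_run) (use cols1 in auto)
    moreover have "lcount (RIGHT (y (c + int n, r + 1))) = lcount (LEFT (y (c + int n, r + 1))) + 1"
      "lcount (LEFT (y (c + int n, r + 1))) \<le> int n"
      using col1_tile_count[OF cols1[of "int n"]] n_ge_1 by auto
    ultimately show False using V J match_up by (simp add: lcount_def)
  next
    case False
    then have row0': "row_kind y (r + 1) = 0" using row_kind_01 by blast
    obtain k l rr s where J': "y (c, r + 1) = junction n k l rr s" "junction_ok e k l rr s"
      using junction_at[OF row0' col0] by blast
    have "n = 1" "k = 0" "l = 1" using J' J match_up junction_ok_bounds[OF J'(2)] n_ge_1 by auto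
    have col1: "col_kind y (c + 1) = 1" using cols1[of 1] n_ge_1 by simp
    obtain b0 b1 cc where H: "y (c + 1, r + 1) = htile n b0 b1 cc" "path_tile_ok e n b0 b1 cc"
      using htile_at[OF row0' col1] by blast
    obtain b0' b1' cc' where H': "y (c + 1, r) = htile n b0' b1' cc'" "path_tile_ok e n b0' b1' cc'"
      using htile_at[OF row0 col1] by blast
    have "LEFT (y (c + 1, r + 1)) = RIGHT (y (c, r + 1))" "LEFT (y (c + 1, r)) = RIGHT (y (c, r))"
      "BOTTOM (y (c + 1, r + 1)) = TOP (y (c + 1, r))" by (rule match_h match_v)+
    then have "b0 = 0" "cc = 1" "b0' = 0" "int n + b1 = 1 + b0'"
      using H H' J' J \<open>n = 1\<close> \<open>k = 0\<close> \<open>l = 1\<close> by simp_all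
    then show False using H(2) \<open>n = 1\<close> unfolding path_tile_ok_def by auto
  qed
qed

text \<open>Below a horizontal tile \<open>10\<close> the counters force a gap of \<open>n - 1\<close> rows, and then the
  tile to its left is again a horizontal tile \<open>10\<close> one row of kind 0 further down; so no
  column of kind 0 could ever be reached to the left.\<close>

lemma htile_10_left:
  assumes H: "y (X, r) = htile n 1 0 cc"
  obtains r' cc' where "col_kind y (X - 1) = 1" "y (X - 1, r') = htile n 1 0 cc'"
proof -
  have row0: "row_kind y r = 0" and col1: "col_kind y X = 1"
    using row_kind_const[of X r] col_kind_const[of X r] H by (auto simp: lkind_def)
  obtain rb where rb: "rb < r" "row_kind y rb = 0" "\<And>\<rho>. rb < \<rho> \<Longrightarrow> \<rho> < r \<Longrightarrow> row_kind y \<rho> = 1"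
    by (rule row0_before[of r]) (rule that)
  define L where "L = r - rb - 1"
  have L: "L = int n - 1 \<or> L = int n" using row0_gap[OF rb(2) row0 rb(1,3)] by (simp add: L_def)
  have count: "lcount (BOTTOM (y (c, r))) = lcount (TOP (y (c, rb))) + L" for c
    using count_across_rows1[of L rb c] rb by (simp add: L_def)
  obtain b0 b1 c2 where Hb: "y (X, rb) = htile n b0 b1 c2" "path_tile_ok e n b0 b1 c2"
    using htile_at[OF rb(2) col1] by blast
  have "int n = 1 + b0 + L" using count[of X] H Hb by (simp add: lcount_def)
  then have "L = int n - 1" "b0 = 0" using L path_tile_ok_bounds[OF Hb(2)] by linarith+
  have match_left: "LEFT (y (X - 1 + 1, \<rho>)) = RIGHT (y (X - 1, \<rho>))" for \<rho> by (rule match_h)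
  have "col_kind y (X - 1) \<noteq> 0"
  proof
    assume col0: "col_kind y (X - 1) = 0"
    obtain k l rr s where J: "y (X - 1, r) = junction n k l rr s"
      using junction_at[OF row0 col0] by metis
    obtain k' l' rr' s' where Jb: "y (X - 1, rb) = junction n k' l' rr' s'" "junction_ok e k' l' rr' s'"
      by (rule junction_at[OF rb(2) col0])
    have "k = 1" using match_left[of r] H J by simp
    moreover have "k + int n = s' + L" using count[of "X - 1"] J Jb by (simp add: lcount_def)
    ultimately show False using junction_ok_bounds[OF Jb(2)] \<open>L = int n - 1\<close> by linarith
  qed
  then have col1': "col_kind y (X - 1) = 1" using col_kind_01 by blast
  obtain b0' b1' c' where H': "y (X - 1, r) = htile n b0' b1' c'"
    using htile_at[OF row0 col1'] by blast
  obtain b0'' b1'' c'' where H'': "y (X - 1, rb) = htile n b0'' b1'' c''"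
    using htile_at[OF rb(2) col1'] by blast
  have "b1' = 1" using match_left[of r] H H' by simp
  moreover have "int n + b1' = 1 + b0'' + L" using count[of "X - 1"] H' H'' by (simp add: lcount_def)
  ultimately have "b0'' = 1" using \<open>L = int n - 1\<close> by simp
  moreover have "b1'' = 0" using match_left[of rb] Hb H'' \<open>b0 = 0\<close> by simp
  ultimately show ?thesis using that[OF col1'] H'' by simp
qed

lemma no_htile_10: "y (X, r) \<noteq> htile n 1 0 cc"
proof -
  have chain: "y (X, r) \<noteq> htile n 1 0 cc" if "col_kind y (X - int m) = 0" for m X r cc
    using that
  proof (induct m arbitrary: X r cc)
    case 0 then show ?case using col_kind_const[of X r] by (auto simp: lkind_def)
  next
    case (Suc m)
    show ?case
    proof
      assume "y (X, r) = htile n 1 0 cc"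
      then obtain r' cc' where "y (X - 1, r') = htile n 1 0 cc'" by (rule htile_10_left)
      moreover have "col_kind y (X - 1 - int m) = 0" using Suc.prems by (simp add: algebra_simps)
      ultimately show False using Suc.hyps[of "X - 1" r' cc'] by simp
    qed
  qed
  obtain d where "1 \<le> d" "col_kind y (X - d) = 0" using col0_left by blast
  then show ?thesis using chain[where m="nat d"] by simp
qed

lemma no_vtile_10: "y (X, r) \<noteq> vtile n 1 0 cc"
  using tiling.no_htile_10[OF tiling_transpose, of r X cc] by (metis hat_hat hat_vtile transpose_apply)

lemma no_junction_1100: "y (c, r) \<noteq> junction n 1 1 0 0"
  using tiling.no_junction_0011[OF tiling_transpose, of r c] by (metis hat_junction transpose_apply)

lemma tile_in_tiles_False: "y m \<in> tiles False n"
proof -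
  obtain c r where m: "m = (c, r)" by fastforce
  show ?thesis using tile_in[of m]
  proof (cases rule: tiles_cases)
    case (wtile i j) then show ?thesis by (auto intro: wtile_in_tiles)
  next
    case (htile b0 b1 cc)
    then show ?thesis using no_htile_10[of c r cc] m by (auto intro: htile_in_tiles simp: path_tile_ok_def)
  next
    case (vtile b0 b1 cc)
    then show ?thesis using no_vtile_10[of c r cc] m by (auto intro: vtile_in_tiles simp: path_tile_ok_def)
  next
    case (junction k l rr s)
    then show ?thesis using no_junction_0011[of c r] no_junction_1100[of c r] m
      by (auto intro: junction_in_tiles simp: junction_ok_def)
  qed
qed

lemma valid_tiles_False: "valid (tiles False n) y"
  using valid_y tile_in_tiles_False unfolding valid_def by blast

end

section \<open>The substitution\<close>

text \<open>A label of a tile is read as the descriptor \<open>(k, t, L)\<close> of a path of length \<open>L\<close> along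
  one side of the tile's image: \<open>k\<close> is the initial value of the counter on the path, and the
  bits carried by the path form the step function \<open>thr t\<close>. The left label describes the
  vertical path on the left side of the image, the bottom label the horizontal path on its
  bottom side; \<open>block\<close> is the tile at offset \<open>(d1, d2)\<close> of the image.\<close>

definition path_k :: "label \<Rightarrow> int" where "path_k l = (if lkind l = 1 then 1 else 1 - lbit l)"
definition path_thr :: "label \<Rightarrow> int" where "path_thr l = (if lkind l = 1 then lcount l - 1 else lcount l)"
definition path_len :: "nat \<Rightarrow> label \<Rightarrow> int" where "path_len n l = (if lkind l = 1 then int n - 1 else int n)"

definition block :: "nat \<Rightarrow> int \<Rightarrow> int \<Rightarrow> int \<Rightarrow> int \<Rightarrow> int \<Rightarrow> int \<Rightarrow> tile" where
  "block n kv tv kh th d1 d2 =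
    (if d1 = 0 \<and> d2 = 0 then junction n (thr th 0) kh (thr tv 0) kv
     else if d1 = 0 then vtile n (thr tv (d2 - 1)) (thr tv d2) (kv + d2 - 1)
     else if d2 = 0 then htile n (thr th (d1 - 1)) (thr th d1) (kh + d1 - 1)
     else wtile (thr tv (d2 - 1) + d1) (thr th (d1 - 1) + d2))"

definition block_of :: "nat \<Rightarrow> label \<Rightarrow> label \<Rightarrow> int \<Rightarrow> int \<Rightarrow> tile" where
  "block_of n lv lh d1 d2 = block n (path_k lv) (path_thr lv) (path_k lh) (path_thr lh) d1 d2"

definition omega :: "nat \<Rightarrow> tile \<Rightarrow> tile word2" where
  "omega n t = ((nat (path_len n (BOTTOM t)) + 1, nat (path_len n (LEFT t)) + 1),
                (\<lambda>(p1, p2). block_of n (LEFT t) (BOTTOM t) (int p1) (int p2)))"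

lemma block_RIGHT: "0 \<le> d1 \<Longrightarrow> 0 \<le> d2 \<Longrightarrow> RIGHT (block n kv tv kh th d1 d2) =
   (if d2 = 0 then (0, thr th d1, kh + d1) else (1, 1, 1 + thr tv (d2 - 1) + d1))"
  by (auto simp: block_def)

lemma block_LEFT0: "0 \<le> d2 \<Longrightarrow> LEFT (block n kv tv kh th 0 d2) =
   (if d2 = 0 then (0, kv, thr tv 0 + int n) else (1, 1, int n + thr tv d2))"
  by (auto simp: block_def)

lemma block_TOP: "0 \<le> d1 \<Longrightarrow> 0 \<le> d2 \<Longrightarrow> TOP (block n kv tv kh th d1 d2) =
   (if d1 = 0 then (0, thr tv d2, kv + d2) else (1, 1, 1 + thr th (d1 - 1) + d2))"
  by (auto simp: block_def)

lemma block_BOTTOM0: "0 \<le> d1 \<Longrightarrow> BOTTOM (block n kv tv kh th d1 0) =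
   (if d1 = 0 then (0, kh, thr th 0 + int n) else (1, 1, int n + thr th d1))"
  by (auto simp: block_def)

lemma block_match_h: "0 \<le> d1 \<Longrightarrow> 0 \<le> d2 \<Longrightarrow>
  RIGHT (block n kv tv kh th d1 d2) = LEFT (block n kv tv kh th (d1 + 1) d2)"
  by (auto simp: block_def)

lemma block_match_v: "0 \<le> d1 \<Longrightarrow> 0 \<le> d2 \<Longrightarrow>
  TOP (block n kv tv kh th d1 d2) = BOTTOM (block n kv tv kh th d1 (d2 + 1))"
  by (auto simp: block_def)

definition path_ok :: "nat \<Rightarrow> int \<Rightarrow> int \<Rightarrow> int \<Rightarrow> bool" where
  "path_ok n k th L \<longleftrightarrow> (k = 0 \<or> k = 1) \<and> (L = int n - 1 \<or> L = int n) \<and> 0 \<le> th \<and> th \<le> L + 1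
     \<and> (th = 0 \<longrightarrow> k = 1) \<and> (k + L = int n \<or> k + L = int n + 1) \<and> (k + L = int n + 1 \<longrightarrow> th \<le> L)"

lemma path_tile_ok_of_path_ok:
  assumes "path_ok n k th L" "1 \<le> d" "d \<le> L"
  shows "path_tile_ok False n (thr th (d - 1)) (thr th d) (k + d - 1)"
  using assms unfolding path_ok_def path_tile_ok_def thr_def by auto

definition tile_path_props :: "nat \<Rightarrow> tile \<Rightarrow> bool" where
  "tile_path_props n t \<longleftrightarrow> path_ok n (path_k (LEFT t)) (path_thr (LEFT t)) (path_len n (LEFT t))
    \<and> path_ok n (path_k (BOTTOM t)) (path_thr (BOTTOM t)) (path_len n (BOTTOM t))
    \<and> junction_ok False (thr (path_thr (BOTTOM t)) 0) (path_k (BOTTOM t)) (thr (path_thr (LEFT t)) 0) (path_k (LEFT t))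
    \<and> (path_len n (BOTTOM t) = int n \<longrightarrow> path_len n (LEFT t) \<le> path_thr (LEFT t))
    \<and> (path_len n (LEFT t) = int n \<longrightarrow> path_len n (BOTTOM t) \<le> path_thr (BOTTOM t))"

lemmas path_defs = path_k_def path_thr_def path_len_def lkind_def lbit_def lcount_def

lemma tiles_path_props:
  assumes "t \<in> tiles False n" "1 \<le> n"
  shows "tile_path_props n t"
  using assms(1)
proof (cases rule: tiles_cases)
  case (wtile i j) then show ?thesis using assms(2)
    unfolding tile_path_props_def path_ok_def by (simp add: path_defs junction_ok_def bit_pairs_def thr_def)
next
  case (htile b0 b1 c) then show ?thesis using assms(2)
    unfolding tile_path_props_def path_ok_def by (simp add: path_defs thr_def) (auto simp: path_tile_ok_def junction_ok_def bit_pairs_def)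
next
  case (vtile b0 b1 c) then show ?thesis using assms(2)
    unfolding tile_path_props_def path_ok_def by (simp add: path_defs thr_def) (auto simp: path_tile_ok_def junction_ok_def bit_pairs_def)
next
  case (junction k l r s) then show ?thesis using assms(2)
    unfolding tile_path_props_def path_ok_def by (simp add: path_defs thr_def) (auto simp: junction_ok_def bit_pairs_def)
qed

lemma block_wtile_range:
  assumes a: "path_ok n kv tv Lv" "path_ok n kh th Lh" "(Lh = int n \<longrightarrow> Lv \<le> tv)" "(Lv = int n \<longrightarrow> Lh \<le> th)"
    "0 \<le> d1" "d1 \<le> Lh" "0 \<le> d2" "d2 \<le> Lv" "d1 \<noteq> 0" "d2 \<noteq> 0"
  shows "1 \<le> thr tv (d2 - 1) + d1 \<and> thr tv (d2 - 1) + d1 \<le> int n \<and>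
        1 \<le> thr th (d1 - 1) + d2 \<and> thr th (d1 - 1) + d2 \<le> int n"
proof -
  have b: "0 \<le> thr a b" "thr a b \<le> 1" for a b by (auto simp: thr_def)
  have L: "Lh = int n - 1 \<or> Lh = int n" "Lv = int n - 1 \<or> Lv = int n" using a(1,2) by (auto simp: path_ok_def)
  have 1: "thr tv (d2 - 1) + d1 \<le> int n"
  proof (cases "Lh = int n")
    case True then have "thr tv (d2 - 1) = 0" using a(3,8) by (simp add: thr_def)
    then show ?thesis using a(6) True by simp
  next
    case False then show ?thesis using L a(6) b[of tv "d2 - 1"] by linarith
  qed
  have 2: "thr th (d1 - 1) + d2 \<le> int n"
  proof (cases "Lv = int n")
    case True then have "thr th (d1 - 1) = 0" using a(4,6) by (simp add: thr_def)
    then show ?thesis using a(8) True by simp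
  next
    case False then show ?thesis using L a(8) b[of th "d1 - 1"] by linarith
  qed
  show ?thesis using 1 2 a(5,7,9,10) b[of tv "d2 - 1"] b[of th "d1 - 1"] by linarith
qed

lemma block_in_tiles:
  assumes "tile_path_props n t" "1 \<le> n" "0 \<le> d1" "d1 \<le> path_len n (BOTTOM t)" "0 \<le> d2" "d2 \<le> path_len n (LEFT t)"
  shows "block_of n (LEFT t) (BOTTOM t) d1 d2 \<in> tiles False n"
proof -
  define kv tv Lv kh th Lh where "kv = path_k (LEFT t)" "tv = path_thr (LEFT t)" "Lv = path_len n (LEFT t)"
    "kh = path_k (BOTTOM t)" "th = path_thr (BOTTOM t)" "Lh = path_len n (BOTTOM t)"
  have P: "path_ok n kv tv Lv" "path_ok n kh th Lh" "junction_ok False (thr th 0) kh (thr tv 0) kv"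
    "Lh = int n \<longrightarrow> Lv \<le> tv" "Lv = int n \<longrightarrow> Lh \<le> th"
    using assms(1) unfolding tile_path_props_def kv_tv_Lv_kh_th_Lh_def by auto
  have e: "block_of n (LEFT t) (BOTTOM t) d1 d2 = block n kv tv kh th d1 d2"
    by (simp add: block_of_def kv_tv_Lv_kh_th_Lh_def)
  show ?thesis unfolding e
  proof (cases "d1 = 0")
    case True note d1 = True
    show "block n kv tv kh th d1 d2 \<in> tiles False n"
    proof (cases "d2 = 0")
      case True then show ?thesis using d1 P(3) by (simp add: block_def junction_in_tiles)
    next
      case False
      then have "path_tile_ok False n (thr tv (d2 - 1)) (thr tv d2) (kv + d2 - 1)"
        using path_tile_ok_of_path_ok[OF P(1)] assms(5,6) kv_tv_Lv_kh_th_Lh_def by auto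
      then show ?thesis using d1 False by (simp add: block_def vtile_in_tiles)
    qed
  next
    case False note d1 = False
    show "block n kv tv kh th d1 d2 \<in> tiles False n"
    proof (cases "d2 = 0")
      case True
      then have "path_tile_ok False n (thr th (d1 - 1)) (thr th d1) (kh + d1 - 1)"
        using path_tile_ok_of_path_ok[OF P(2)] assms(3,4) d1 kv_tv_Lv_kh_th_Lh_def by auto
      then show ?thesis using d1 True by (simp add: block_def htile_in_tiles)
    next
      case False
      have "1 \<le> thr tv (d2 - 1) + d1" "thr tv (d2 - 1) + d1 \<le> int n"
        "1 \<le> thr th (d1 - 1) + d2" "thr th (d1 - 1) + d2 \<le> int n"
        using block_wtile_range[OF P(1,2,4,5)] assms(3-6) d1 False unfolding kv_tv_Lv_kh_th_Lh_def[symmetric]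
        by auto
      then show ?thesis using d1 False by (simp add: block_def wtile_in_tiles)
    qed
  qed
qed

text \<open>The relations between the path descriptors of the left, bottom and right labels of a tile
  that make the images of horizontally adjacent tiles fit together (conversely, see
  \<open>tile_frame.decode_in_tiles\<close>).\<close>

lemma tile_path_match:
  assumes "t \<in> tiles e n" "1 \<le> n"
  shows "path_len n (RIGHT t) = path_len n (LEFT t) \<and>
    thr (path_thr (BOTTOM t)) (path_len n (BOTTOM t)) = path_k (RIGHT t) \<and>
    path_k (BOTTOM t) + path_len n (BOTTOM t) = thr (path_thr (RIGHT t)) 0 + int n \<and>
    (\<forall>d. 1 \<le> d \<longrightarrow> d \<le> path_len n (LEFT t) \<longrightarrow>
        1 + thr (path_thr (LEFT t)) (d - 1) + path_len n (BOTTOM t) = int n + thr (path_thr (RIGHT t)) d)"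
  using assms(1)
proof (cases rule: tiles_cases)
  case (wtile i j) then show ?thesis using assms(2) by (auto simp add: path_defs thr_def)
next
  case (htile b0 b1 c) then show ?thesis using assms(2) by (simp add: path_defs thr_def) (auto simp: path_tile_ok_def)
next
  case (vtile b0 b1 c) then show ?thesis using assms(2) by (simp add: path_defs thr_def) (auto simp: path_tile_ok_def)
next
  case (junction k l r s) then show ?thesis using assms(2) by (simp add: path_defs thr_def) (auto simp: junction_ok_def bit_pairs_def)
qed

lemma omega_size: "wsize (omega n t) = (nat (path_len n (BOTTOM t)) + 1, nat (path_len n (LEFT t)) + 1)"
  by (simp add: omega_def wsize_def)
lemma omega_cont: "wcont (omega n t) (a, b) = block_of n (LEFT t) (BOTTOM t) (int a) (int b)"
  by (simp add: omega_def wcont_def)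

lemma path_len_nonneg: "1 \<le> n \<Longrightarrow> 0 \<le> path_len n l" by (simp add: path_len_def)

locale omega_tiling = tiling n False y for n y
begin

abbreviation "block_width \<equiv> (\<lambda>i. fst (wsize (omega n (y (i, 0)))))"
abbreviation "block_height \<equiv> (\<lambda>j. snd (wsize (omega n (y (0, j)))))"

lemma block_width_pos: "1 \<le> block_width i" by (simp add: omega_size)
lemma block_height_pos: "1 \<le> block_height j" by (simp add: omega_size)

lemma path_len_col: "path_len n (BOTTOM (y (i, j))) = path_len n (BOTTOM (y (i, 0)))"
  using col_kind_const[of i j] col_kind_const[of i 0] by (simp add: path_len_def)
lemma path_len_row: "path_len n (LEFT (y (i, j))) = path_len n (LEFT (y (0, j)))"
  using row_kind_const[of i j] row_kind_const[of 0 j] by (simp add: path_len_def)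

lemma block_width_eq: "int (block_width i) = path_len n (BOTTOM (y (i, j))) + 1"
  using path_len_col[of i j] path_len_nonneg[OF n_ge_1] by (simp add: omega_size)
lemma block_height_eq: "int (block_height j) = path_len n (LEFT (y (i, j))) + 1"
  using path_len_row[of i j] path_len_nonneg[OF n_ge_1] by (simp add: omega_size)

lemma cell_eval:
  assumes "0 \<le> d1" "d1 \<le> path_len n (BOTTOM (y (i, j)))" "0 \<le> d2" "d2 \<le> path_len n (LEFT (y (i, j)))"
  shows "subst_cfg (omega n) y (blk_pos block_width i + d1, blk_pos block_height j + d2) =
         block_of n (LEFT (y (i, j))) (BOTTOM (y (i, j))) d1 d2"
proof -
  have "subst_cfg (omega n) y (blk_pos block_width i + d1, blk_pos block_height j + d2) =
        wcont (omega n (y (i, j))) (nat (blk_pos block_width i + d1 - blk_pos block_width i), nat (blk_pos block_height j + d2 - blk_pos block_height j))"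
  proof (rule subst_cfg_eval)
    show "1 \<le> block_width i" for i by (rule block_width_pos)
    show "1 \<le> block_height j" for j by (rule block_height_pos)
    show "blk_pos block_width i \<le> blk_pos block_width i + d1" "blk_pos block_height j \<le> blk_pos block_height j + d2" using assms by auto
    show "blk_pos block_width i + d1 < blk_pos block_width (i + 1)" using blk_pos_succ[of block_width i] block_width_eq[of i j] assms by simp
    show "blk_pos block_height j + d2 < blk_pos block_height (j + 1)" using blk_pos_succ[of block_height j] block_height_eq[where i=i and j=j] assms by simp
  qed
  then show ?thesis using assms by (simp add: omega_cont)
qed

lemma cell_exists:
  obtains i j d1 d2 where "p1 = blk_pos block_width i + d1" "p2 = blk_pos block_height j + d2"
    "0 \<le> d1" "d1 \<le> path_len n (BOTTOM (y (i, j)))" "0 \<le> d2" "d2 \<le> path_len n (LEFT (y (i, j)))"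
proof -
  obtain i where i: "blk_pos block_width i \<le> p1" "p1 < blk_pos block_width (i + 1)" using blk_pos_cover[of block_width] block_width_pos by blast
  obtain j where j: "blk_pos block_height j \<le> p2" "p2 < blk_pos block_height (j + 1)" using blk_pos_cover[of block_height] block_height_pos by blast
  show ?thesis
    apply (rule that[of i "p1 - blk_pos block_width i" j "p2 - blk_pos block_height j"])
    using i j blk_pos_succ[of block_width i] blk_pos_succ[of block_height j] block_width_eq[of i j] block_height_eq[where i=i and j=j] by auto
qed

lemma tile_path_props_at: "tile_path_props n (y m)" using tiles_path_props[OF tile_in n_ge_1] .

lemma subst_tile_in: "subst_cfg (omega n) y (p1, p2) \<in> tiles False n"
proof -
  obtain i j d1 d2 where c: "p1 = blk_pos block_width i + d1" "p2 = blk_pos block_height j + d2"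
    "0 \<le> d1" "d1 \<le> path_len n (BOTTOM (y (i, j)))" "0 \<le> d2" "d2 \<le> path_len n (LEFT (y (i, j)))"
    by (rule cell_exists)
  then show ?thesis using cell_eval[OF c(3-6)] block_in_tiles[OF tile_path_props_at n_ge_1 c(3-6)] by simp
qed

lemma subst_match_h: "RIGHT (subst_cfg (omega n) y (p1, p2)) = LEFT (subst_cfg (omega n) y (p1 + 1, p2))"
proof -
  obtain i j d1 d2 where c: "p1 = blk_pos block_width i + d1" "p2 = blk_pos block_height j + d2"
    "0 \<le> d1" "d1 \<le> path_len n (BOTTOM (y (i, j)))" "0 \<le> d2" "d2 \<le> path_len n (LEFT (y (i, j)))"
    by (rule cell_exists)
  let ?t = "y (i, j)"
  have ev: "subst_cfg (omega n) y (p1, p2) = block n (path_k (LEFT ?t)) (path_thr (LEFT ?t)) (path_k (BOTTOM ?t)) (path_thr (BOTTOM ?t)) d1 d2"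
    using cell_eval[OF c(3-6)] c by (simp add: block_of_def)
  show ?thesis
  proof (cases "d1 < path_len n (BOTTOM ?t)")
    case True
    have "p1 + 1 = blk_pos block_width i + (d1 + 1)" using c by simp
    then have "subst_cfg (omega n) y (p1 + 1, p2) = block n (path_k (LEFT ?t)) (path_thr (LEFT ?t)) (path_k (BOTTOM ?t)) (path_thr (BOTTOM ?t)) (d1 + 1) d2"
      using cell_eval[of "d1 + 1" i j d2] c True by (simp add: block_of_def add.assoc)
    then show ?thesis using ev block_match_h c by simp
  next
    case False
    then have d1: "d1 = path_len n (BOTTOM ?t)" using c by simp
    let ?t' = "y (i + 1, j)"
    have "p1 + 1 = blk_pos block_width (i + 1) + 0"
      using blk_pos_succ[of block_width i] block_width_eq[of i j] c d1 by simp
    then have "subst_cfg (omega n) y (p1 + 1, p2) = block n (path_k (LEFT ?t')) (path_thr (LEFT ?t')) (path_k (BOTTOM ?t')) (path_thr (BOTTOM ?t')) 0 d2"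
      using cell_eval[of 0 "i + 1" j d2] c path_len_row[of "i + 1" j] path_len_row[of i j] path_len_nonneg[OF n_ge_1]
      by (simp add: block_of_def)
    moreover have "LEFT ?t' = RIGHT ?t" using match_h by simp
    ultimately show ?thesis using ev tile_path_match[OF tile_in n_ge_1, of "(i, j)"] c d1
      by (auto simp: block_RIGHT block_LEFT0)
  qed
qed

lemma subst_match_v: "TOP (subst_cfg (omega n) y (p1, p2)) = BOTTOM (subst_cfg (omega n) y (p1, p2 + 1))"
proof -
  obtain i j d1 d2 where c: "p1 = blk_pos block_width i + d1" "p2 = blk_pos block_height j + d2"
    "0 \<le> d1" "d1 \<le> path_len n (BOTTOM (y (i, j)))" "0 \<le> d2" "d2 \<le> path_len n (LEFT (y (i, j)))"
    by (rule cell_exists)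
  let ?t = "y (i, j)"
  have ev: "subst_cfg (omega n) y (p1, p2) = block n (path_k (LEFT ?t)) (path_thr (LEFT ?t)) (path_k (BOTTOM ?t)) (path_thr (BOTTOM ?t)) d1 d2"
    using cell_eval[OF c(3-6)] c by (simp add: block_of_def)
  show ?thesis
  proof (cases "d2 < path_len n (LEFT ?t)")
    case True
    have "p2 + 1 = blk_pos block_height j + (d2 + 1)" using c by simp
    then have "subst_cfg (omega n) y (p1, p2 + 1) = block n (path_k (LEFT ?t)) (path_thr (LEFT ?t)) (path_k (BOTTOM ?t)) (path_thr (BOTTOM ?t)) d1 (d2 + 1)"
      using cell_eval[of d1 i j "d2 + 1"] c True by (simp add: block_of_def add.assoc)
    then show ?thesis using ev block_match_v c by simp
  next
    case False
    then have d2: "d2 = path_len n (LEFT ?t)" using c by simp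
    let ?t' = "y (i, j + 1)"
    have "p2 + 1 = blk_pos block_height (j + 1) + 0"
      using blk_pos_succ[of block_height j] block_height_eq[where i=i and j=j] c d2 by simp
    then have "subst_cfg (omega n) y (p1, p2 + 1) = block n (path_k (LEFT ?t')) (path_thr (LEFT ?t')) (path_k (BOTTOM ?t')) (path_thr (BOTTOM ?t')) d1 0"
      using cell_eval[of d1 i "j + 1" 0] c path_len_col[of i "j + 1"] path_len_col[of i j] path_len_nonneg[OF n_ge_1]
      by (simp add: block_of_def)
    moreover have "BOTTOM ?t' = TOP ?t" using match_v by simp
    ultimately show ?thesis using ev tile_path_match[OF hat_in_tiles[OF tile_in] n_ge_1, of "(i, j)"] c d2
      by (auto simp: block_TOP block_BOTTOM0)
  qed
qed

lemma subst_valid: "valid (tiles False n) (subst_cfg (omega n) y)"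
  unfolding valid_def using subst_tile_in subst_match_h subst_match_v by auto

lemma omega_morphism: "snd (wsize (omega n (y (a, b)))) = snd (wsize (omega n (y (a + 1, b)))) \<and>
      fst (wsize (omega n (y (a, b)))) = fst (wsize (omega n (y (a, b + 1))))"
  using path_len_row[of a b] path_len_row[of "a+1" b] path_len_col[of a b] path_len_col[of a "b+1"] by (simp add: omega_size)

end

section \<open>Expansiveness\<close>

lemma omega_pos: "1 \<le> n \<Longrightarrow> 0 < fst (wsize (omega n a)) \<and> 0 < snd (wsize (omega n a))"
  by (simp add: omega_size)

lemma omega_origin:
  "\<exists>k l r s. wcont (omega n a) (0, 0) = junction n k l r s"
  by (auto simp: omega_cont block_of_def block_def)

lemma omega_junction_size: "1 \<le> n \<Longrightarrow> wsize (omega n (junction n k l r s)) = (n + 1, n + 1)"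
  by (simp add: omega_size path_len_def lkind_def)

text \<open>Every iterate has a junction in its lower left corner, and the image of a junction is an
  \<open>(n + 1) \<times> (n + 1)\<close> block, so each further substitution adds at least \<open>n\<close> in each direction.\<close>

lemma omega_iter_growth:
  fixes a :: tile
  assumes n: "1 \<le> n"
  defines "u m \<equiv> (subst_word (omega n) ^^ Suc m) (letter_word a)"
  shows "m < fst (wsize (u m)) \<and> m < snd (wsize (u m)) \<and> (\<exists>k l r s. wcont (u m) (0, 0) = junction n k l r s)"
proof (induct m)
  case 0
  have "wsize (letter_word a) = (1, 1)" "wcont (letter_word a) (0, 0) = a"
    by (simp_all add: letter_word_def wsize_def wcont_def)
  then show ?case
    using subst_word_size[of "letter_word a" "omega n"] subst_word_origin[of "letter_word a" "omega n"]
      omega_pos[OF n] omega_origin[of n a] by (simp add: u_def letter_word_def wcont_def)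
next
  case (Suc m)
  then obtain k l r s where J: "wcont (u m) (0, 0) = junction n k l r s" by blast
  have u: "u (Suc m) = subst_word (omega n) (u m)" by (simp add: u_def)
  have pos: "0 < fst (wsize (u m))" "0 < snd (wsize (u m))" using Suc by auto
  have "wcont (u (Suc m)) (0, 0) = wcont (omega n (junction n k l r s)) (0, 0)"
    unfolding u using subst_word_origin[OF pos, of "omega n"] omega_pos[OF n] J by simp
  moreover have "m + n < fst (wsize (u (Suc m)))" "m + n < snd (wsize (u (Suc m)))"
    unfolding u using subst_word_size_ge[OF pos, of "omega n"] omega_pos[OF n] J
      omega_junction_size[OF n] Suc by fastforce+
  ultimately show ?case using n omega_origin[of n "junction n k l r s"] by auto
qed

lemma expansive_omega: "1 \<le> n \<Longrightarrow> expansive X (omega n)"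
  unfolding expansive_def using omega_iter_growth[where m=K for K] by blast

section \<open>Recognizability\<close>

lemma tile_eq_by_LEFT_BOTTOM:
  assumes "t \<in> tiles e n" "t' \<in> tiles e n" "LEFT t = LEFT t'" "BOTTOM t = BOTTOM t'"
  shows "t = t'"
  using assms(1,2) by (elim tiles_cases) (use assms(3,4) in auto)

definition path_label :: "nat \<Rightarrow> int \<Rightarrow> int \<Rightarrow> int \<Rightarrow> label" where
  "path_label n k th L = (if L = int n - 1 then (1, 1, 1 + th) else (0, 1 - k, th))"

lemma path_label_of_label:
  assumes "t \<in> tiles e n"
  shows "LEFT t = path_label n (path_k (LEFT t)) (path_thr (LEFT t)) (path_len n (LEFT t))"
    "BOTTOM t = path_label n (path_k (BOTTOM t)) (path_thr (BOTTOM t)) (path_len n (BOTTOM t))"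
  using assms by (cases rule: tiles_cases; simp add: path_label_def path_defs)+

lemma LEFT_eq_by_path:
  assumes "t \<in> tiles False n" "t' \<in> tiles False n" "1 \<le> n"
    and "path_len n (LEFT t) = path_len n (LEFT t')" "path_k (LEFT t) = path_k (LEFT t')"
    and "\<And>d. 0 \<le> d \<Longrightarrow> d \<le> path_len n (LEFT t) \<Longrightarrow> thr (path_thr (LEFT t)) d = thr (path_thr (LEFT t')) d"
  shows "LEFT t = LEFT t'"
proof -
  have "path_ok n (path_k (LEFT t)) (path_thr (LEFT t)) (path_len n (LEFT t))" "path_ok n (path_k (LEFT t')) (path_thr (LEFT t')) (path_len n (LEFT t'))"
    using tiles_path_props[OF assms(1,3)] tiles_path_props[OF assms(2,3)] by (auto simp: tile_path_props_def)
  then have "path_thr (LEFT t) = path_thr (LEFT t')" using thr_inj[OF _ _ _ _ assms(6)] assms(4) by (auto simp: path_ok_def)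
  then show ?thesis using path_label_of_label(1)[OF assms(1)] path_label_of_label(1)[OF assms(2)] assms(4,5) by metis
qed

lemma BOTTOM_eq_by_path:
  assumes "t \<in> tiles False n" "t' \<in> tiles False n" "1 \<le> n"
    and "path_len n (BOTTOM t) = path_len n (BOTTOM t')" "path_k (BOTTOM t) = path_k (BOTTOM t')"
    and "\<And>d. 0 \<le> d \<Longrightarrow> d \<le> path_len n (BOTTOM t) \<Longrightarrow> thr (path_thr (BOTTOM t)) d = thr (path_thr (BOTTOM t')) d"
  shows "BOTTOM t = BOTTOM t'"
  using LEFT_eq_by_path[OF hat_in_tiles[OF assms(1)] hat_in_tiles[OF assms(2)] assms(3)] assms(4-6) by simp

definition is_junction :: "tile \<Rightarrow> bool" where "is_junction t \<longleftrightarrow> lkind (LEFT t) = 0 \<and> lkind (BOTTOM t) = 0"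

lemma is_junction_block: "0 \<le> d1 \<Longrightarrow> 0 \<le> d2 \<Longrightarrow> is_junction (block n kv tv kh th d1 d2) \<longleftrightarrow> d1 = 0 \<and> d2 = 0"
  by (auto simp: is_junction_def block_def lkind_def)

context omega_tiling
begin

lemma junction_iff_block_corner:
  "is_junction (subst_cfg (omega n) y (p1, p2)) \<longleftrightarrow>
    p1 \<in> range (blk_pos block_width) \<and> p2 \<in> range (blk_pos block_height)"
proof -
  obtain i j d1 d2 where c: "p1 = blk_pos block_width i + d1" "p2 = blk_pos block_height j + d2"
    "0 \<le> d1" "d1 \<le> path_len n (BOTTOM (y (i, j)))" "0 \<le> d2" "d2 \<le> path_len n (LEFT (y (i, j)))"
    by (rule cell_exists)
  have "is_junction (subst_cfg (omega n) y (p1, p2)) \<longleftrightarrow> d1 = 0 \<and> d2 = 0"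
    using cell_eval[OF c(3-6)] c is_junction_block by (simp add: block_of_def)
  moreover have "p1 \<in> range (blk_pos block_width) \<longleftrightarrow> d1 = 0"
    using blk_pos_add_in_range[of block_width d1 i] block_width_pos block_width_eq[of i j] c by simp
  moreover have "p2 \<in> range (blk_pos block_height) \<longleftrightarrow> d2 = 0"
    using blk_pos_add_in_range[of block_height d2 j] block_height_pos block_height_eq[where i=i and j=j] c
    by simp
  ultimately show ?thesis by simp
qed

lemma block_LEFT_col:
  assumes "0 \<le> d2" "d2 \<le> path_len n (LEFT (y (i, j)))"
  shows "LEFT (subst_cfg (omega n) y (blk_pos block_width i, blk_pos block_height j + d2)) =
    (if d2 = 0 then (0, path_k (LEFT (y (i,j))), thr (path_thr (LEFT (y (i,j)))) 0 + int n)
     else (1, 1, int n + thr (path_thr (LEFT (y (i,j)))) d2))"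
  using cell_eval[of 0 i j d2] assms path_len_nonneg[OF n_ge_1] by (simp add: block_of_def block_LEFT0)

lemma block_BOTTOM_row:
  assumes "0 \<le> d1" "d1 \<le> path_len n (BOTTOM (y (i, j)))"
  shows "BOTTOM (subst_cfg (omega n) y (blk_pos block_width i + d1, blk_pos block_height j)) =
    (if d1 = 0 then (0, path_k (BOTTOM (y (i,j))), thr (path_thr (BOTTOM (y (i,j)))) 0 + int n)
     else (1, 1, int n + thr (path_thr (BOTTOM (y (i,j)))) d1))"
  using cell_eval[of d1 i j 0] assms path_len_nonneg[OF n_ge_1] by (simp add: block_of_def block_BOTTOM0)

end

locale omega_tiling_pair = Y: omega_tiling n y + Y': omega_tiling n y' for n y y' +
  fixes k1 k2 k1' k2' :: int
  assumes shift_eq: "\<And>p1 p2. subst_cfg (omega n) y (p1 + k1, p2 + k2) = subst_cfg (omega n) y' (p1 + k1', p2 + k2')"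
    and offsets: "0 \<le> k1" "k1 < int (Y.block_width 0)" "0 \<le> k2" "k2 < int (Y.block_height 0)"
      "0 \<le> k1'" "k1' < int (Y'.block_width 0)" "0 \<le> k2'" "k2' < int (Y'.block_height 0)"
begin

lemma corners_translate:
  "(p + k1 \<in> range (blk_pos Y.block_width) \<and> q + k2 \<in> range (blk_pos Y.block_height)) \<longleftrightarrow>
   (p + k1' \<in> range (blk_pos Y'.block_width) \<and> q + k2' \<in> range (blk_pos Y'.block_height))"
  using Y.junction_iff_block_corner[of "p + k1" "q + k2"] Y'.junction_iff_block_corner[of "p + k1'" "q + k2'"]
    shift_eq[of p q] by simp

lemma corner_cols_translate:
  "p + k1 \<in> range (blk_pos Y.block_width) \<longleftrightarrow> p + k1' \<in> range (blk_pos Y'.block_width)"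
  using corners_translate[of p "- k2"] corners_translate[of p "- k2'"] zero_in_range_blk_pos by auto

lemma corner_rows_translate:
  "q + k2 \<in> range (blk_pos Y.block_height) \<longleftrightarrow> q + k2' \<in> range (blk_pos Y'.block_height)"
  using corners_translate[of "- k1" q] corners_translate[of "- k1'" q] zero_in_range_blk_pos by auto

lemma offsets_eq: "k1 = k1'" "k2 = k2'"
proof -
  note gap = blk_pos_range_gap[of Y.block_width] blk_pos_range_gap[of Y'.block_width]
    blk_pos_range_gap[of Y.block_height] blk_pos_range_gap[of Y'.block_height]
  show "k1 = k1'"
    by (rule translate_offset_eq[OF zero_in_range_blk_pos zero_in_range_blk_pos _ _ corner_cols_translate])
      (use gap(1,2) Y.block_width_pos Y'.block_width_pos offsets in auto)
  show "k2 = k2'"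
    by (rule translate_offset_eq[OF zero_in_range_blk_pos zero_in_range_blk_pos _ _ corner_rows_translate])
      (use gap(3,4) Y.block_height_pos Y'.block_height_pos offsets in auto)
qed

lemma subst_eq: "subst_cfg (omega n) y = subst_cfg (omega n) y'"
proof
  fix p :: "int \<times> int"
  show "subst_cfg (omega n) y p = subst_cfg (omega n) y' p"
    using shift_eq[of "fst p - k1" "snd p - k2"] offsets_eq by simp
qed

lemma blk_pos_eq:
  "blk_pos Y.block_width = blk_pos Y'.block_width" "blk_pos Y.block_height = blk_pos Y'.block_height"
proof -
  have "range (blk_pos Y.block_width) = range (blk_pos Y'.block_width)"
    using corner_cols_translate[of "q - k1" for q] offsets_eq by auto
  then show "blk_pos Y.block_width = blk_pos Y'.block_width"
    using strict_mono_range_eq[OF strict_mono_blk_pos[of Y.block_width, OF Y.block_width_pos]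
        strict_mono_blk_pos[of Y'.block_width, OF Y'.block_width_pos]] by simp
  have "range (blk_pos Y.block_height) = range (blk_pos Y'.block_height)"
    using corner_rows_translate[of "q - k2" for q] offsets_eq by auto
  then show "blk_pos Y.block_height = blk_pos Y'.block_height"
    using strict_mono_range_eq[OF strict_mono_blk_pos[of Y.block_height, OF Y.block_height_pos]
        strict_mono_blk_pos[of Y'.block_height, OF Y'.block_height_pos]] by simp
qed

lemma block_sizes_eq: "Y.block_width i = Y'.block_width i" "Y.block_height j = Y'.block_height j"
  using fun_cong[OF blk_pos_eq(1), of "i + 1"] fun_cong[OF blk_pos_eq(1), of i]
    fun_cong[OF blk_pos_eq(2), of "j + 1"] fun_cong[OF blk_pos_eq(2), of j]
  by (simp_all add: blk_pos_succ)

text \<open>The left column of a block shows the path descriptor of the left label of its tile, and the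
  bottom row that of the bottom label.\<close>

lemma LEFT_eq: "LEFT (y (i, j)) = LEFT (y' (i, j))"
proof -
  let ?t = "y (i, j)" and ?t' = "y' (i, j)"
  have len: "path_len n (LEFT ?t) = path_len n (LEFT ?t')"
    using Y.block_height_eq[where i=i and j=j] Y'.block_height_eq[where i=i and j=j] block_sizes_eq(2)[of j]
    by simp
  have col: "LEFT (subst_cfg (omega n) y (blk_pos Y.block_width i, blk_pos Y.block_height j + d)) =
      LEFT (subst_cfg (omega n) y' (blk_pos Y'.block_width i, blk_pos Y'.block_height j + d))" for d
    using subst_eq blk_pos_eq by simp
  show ?thesis
  proof (rule LEFT_eq_by_path[OF Y.tile_in Y'.tile_in Y.n_ge_1 len])
    show "path_k (LEFT ?t) = path_k (LEFT ?t')"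
      using col[of 0] Y.block_LEFT_col[of 0 i j] Y'.block_LEFT_col[of 0 i j] path_len_nonneg[OF Y.n_ge_1]
      by simp
    show "thr (path_thr (LEFT ?t)) d = thr (path_thr (LEFT ?t')) d" if "0 \<le> d" "d \<le> path_len n (LEFT ?t)" for d
      using col[of d] Y.block_LEFT_col[of d i j] Y'.block_LEFT_col[of d i j] that len
      by (cases "d = 0") simp_all
  qed
qed

lemma BOTTOM_eq: "BOTTOM (y (i, j)) = BOTTOM (y' (i, j))"
proof -
  let ?t = "y (i, j)" and ?t' = "y' (i, j)"
  have len: "path_len n (BOTTOM ?t) = path_len n (BOTTOM ?t')"
    using Y.block_width_eq[of i j] Y'.block_width_eq[of i j] block_sizes_eq(1)[of i] by simp
  have row: "BOTTOM (subst_cfg (omega n) y (blk_pos Y.block_width i + d, blk_pos Y.block_height j)) =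
      BOTTOM (subst_cfg (omega n) y' (blk_pos Y'.block_width i + d, blk_pos Y'.block_height j))" for d
    using subst_eq blk_pos_eq by simp
  show ?thesis
  proof (rule BOTTOM_eq_by_path[OF Y.tile_in Y'.tile_in Y.n_ge_1 len])
    show "path_k (BOTTOM ?t) = path_k (BOTTOM ?t')"
      using row[of 0] Y.block_BOTTOM_row[of 0 i j] Y'.block_BOTTOM_row[of 0 i j] path_len_nonneg[OF Y.n_ge_1]
      by simp
    show "thr (path_thr (BOTTOM ?t)) d = thr (path_thr (BOTTOM ?t')) d" if "0 \<le> d" "d \<le> path_len n (BOTTOM ?t)" for d
      using row[of d] Y.block_BOTTOM_row[of d i j] Y'.block_BOTTOM_row[of d i j] that len
      by (cases "d = 0") simp_all
  qed
qed

lemma tilings_eq: "y = y'"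
proof
  fix p :: "int \<times> int"
  show "y p = y' p"
    using tile_eq_by_LEFT_BOTTOM[OF Y.tile_in Y'.tile_in LEFT_eq BOTTOM_eq] by (cases p) simp
qed

end

lemma recognizable_omega:
  assumes "1 \<le> n"
  shows "recognizable (Omega n) (omega n)"
  unfolding recognizable_def
proof (intro allI impI)
  fix z k y k' y'
  assume "y \<in> Omega n \<and> z = shift k (subst_cfg (omega n) y) \<and>
      0 \<le> fst k \<and> fst k < int (fst (wsize (omega n (y (0, 0))))) \<and>
      0 \<le> snd k \<and> snd k < int (snd (wsize (omega n (y (0, 0))))) \<and>
      y' \<in> Omega n \<and> z = shift k' (subst_cfg (omega n) y') \<and>
      0 \<le> fst k' \<and> fst k' < int (fst (wsize (omega n (y' (0, 0))))) \<and>
      0 \<le> snd k' \<and> snd k' < int (snd (wsize (omega n (y' (0, 0)))))"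
  note h = this
  then have "shift k (subst_cfg (omega n) y) (p1, p2) = shift k' (subst_cfg (omega n) y') (p1, p2)" for p1 p2
    by metis
  then have "subst_cfg (omega n) y (p1 + fst k, p2 + snd k) = subst_cfg (omega n) y' (p1 + fst k', p2 + snd k')"
    for p1 p2 by (simp add: shift_def)
  then interpret omega_tiling_pair n y y' "fst k" "snd k" "fst k'" "snd k'"
    using h assms by unfold_locales (auto simp: Omega_iff)
  show "k = k' \<and> y = y'" using offsets_eq tilings_eq by (simp add: prod_eq_iff)
qed

lemma path_label_decode:
  assumes "path_ok n k th L"
  shows "path_k (path_label n k th L) = k" "path_thr (path_label n k th L) = th" "path_len n (path_label n k th L) = L"
  using assms by (auto simp: path_ok_def path_label_def path_defs)

text \<open>Path descriptors \<open>(kv, tv)\<close>, \<open>(kv', tv')\<close> of length \<open>Lv\<close> on the left and right sides and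
  \<open>(kh, th)\<close>, \<open>(kh', th')\<close> of length \<open>Lh\<close> on the bottom and top sides of a block, related as the
  labels of a tile are by \<open>tile_path_match\<close>.\<close>

locale tile_frame =
  fixes n :: nat and kv tv kv' tv' kh th kh' th' Lv Lh :: int
  assumes n_ge_1: "1 \<le> n"
    and paths: "path_ok n kv tv Lv" "path_ok n kv' tv' Lv" "path_ok n kh th Lh" "path_ok n kh' th' Lh"
    and match_vpaths: "\<And>d. 1 \<le> d \<Longrightarrow> d \<le> Lv \<Longrightarrow> 1 + thr tv (d - 1) + Lh = int n + thr tv' d"
    and match_bottom: "thr th Lh = kv'" "kh + Lh = thr tv' 0 + int n"
    and match_hpaths: "\<And>d. 1 \<le> d \<Longrightarrow> d \<le> Lh \<Longrightarrow> 1 + thr th (d - 1) + Lv = int n + thr th' d"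
    and match_top: "thr tv Lv = kh'" "kv + Lv = thr th' 0 + int n"
begin

lemma tile_frame_swap: "tile_frame n kh th kh' th' kv tv kv' tv' Lh Lv"
  using n_ge_1 paths match_vpaths match_hpaths match_bottom match_top by unfold_locales auto

lemma frame_lengths: "Lv = int n - 1 \<or> Lv = int n" "Lh = int n - 1 \<or> Lh = int n"
  using paths by (auto simp: path_ok_def)

lemma decode_wtile:
  assumes "Lv = int n - 1" "Lh = int n - 1"
  shows "(path_label n kv' tv' Lv, path_label n kh' th' Lh, path_label n kv tv Lv, path_label n kh th Lh) \<in> tiles True n"
proof -
  have kh: "kh = 1" "1 \<le> tv'" using match_bottom(2) paths(3) assms thr_01[of tv' 0]
    by (auto simp: path_ok_def thr_def split: if_splits)
  have kv: "kv = 1" "1 \<le> th'" using match_top(2) paths(1) assms thr_01[of th' 0]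
    by (auto simp: path_ok_def thr_def split: if_splits)
  have tv: "tv \<le> int n - 1"
  proof (rule ccontr)
    assume "\<not> ?thesis"
    then have "thr tv Lv = 0" using assms by (simp add: thr_def)
    then show False using match_top(1) paths(4) assms by (auto simp: path_ok_def)
  qed
  have th: "th \<le> int n - 1"
  proof (rule ccontr)
    assume "\<not> ?thesis"
    then have "thr th Lh = 0" using assms by (simp add: thr_def)
    then show False using match_bottom(1) paths(2) assms by (auto simp: path_ok_def)
  qed
  have tv': "tv' = tv + 1"
    by (rule thr_shift_eq[of tv "int n - 1"]) (use paths(1,2) match_vpaths assms kh tv in \<open>auto simp: path_ok_def\<close>)
  have th': "th' = th + 1"
    by (rule thr_shift_eq[of th "int n - 1"]) (use paths(3,4) match_hpaths assms kv th in \<open>auto simp: path_ok_def\<close>)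
  have "wtile (1 + tv) (1 + th) \<in> tiles True n"
    by (rule wtile_in_tiles) (use paths(1,3) tv th in \<open>auto simp: path_ok_def\<close>)
  moreover have "wtile (1 + tv) (1 + th) = (path_label n kv' tv' Lv, path_label n kh' th' Lh, path_label n kv tv Lv, path_label n kh th Lh)"
    using assms tv' th' by (simp add: path_label_def wtile_def algebra_simps)
  ultimately show ?thesis by simp
qed

lemma htile_frame_vertical:
  assumes LvE: "Lv = int n" and LhE: "Lh = int n - 1"
  shows "tv \<le> int n" "tv' = tv + 1"
proof -
  have "kh = 1 + thr tv' 0" using match_bottom(2) LhE by simp
  moreover have "kh \<le> 1" using paths(3) by (auto simp: path_ok_def)
  ultimately have "thr tv' 0 = 0" using thr_01[of tv' 0] by auto
  then have tv'1: "1 \<le> tv'" by (simp add: thr_0_iff)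
  show tvn: "tv \<le> int n"
  proof (rule ccontr)
    assume "\<not> ?thesis"
    then have "thr tv Lv = 0" using LvE by (simp add: thr_0_iff)
    then show False using match_top(1) paths(4) LhE by (simp add: path_ok_def)
  qed
  show "tv' = tv + 1"
  proof (rule thr_shift_eq[of tv "int n"])
    fix d assume "1 \<le> d" "d \<le> int n"
    then show "thr tv (d - 1) = thr tv' d" using match_vpaths[of d] LvE LhE by simp
  qed (use paths(1,2) LvE tvn tv'1 in \<open>auto simp: path_ok_def\<close>)
qed

lemma htile_frame_horizontal:
  assumes LvE: "Lv = int n" and LhE: "Lh = int n - 1"
  shows "th = int n - kv'" "th' = 1 - kv"
proof -
  have p3: "0 \<le> th" "th \<le> int n" using paths(3) LhE by (auto simp: path_ok_def)
  have p4: "kh' = 1" "0 \<le> th'" "th' \<le> int n" using paths(4) LhE by (auto simp: path_ok_def)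
  have thge: "int n - 1 \<le> th"
  proof (cases "n = 1")
    case False
    then have "1 + thr th (int n - 1 - 1) + Lv = int n + thr th' (int n - 1)"
      using match_hpaths[of "int n - 1"] LhE n_ge_1 by simp
    then have "thr th (int n - 1 - 1) = 0" using LvE thr_01[of th "int n - 1 - 1"] thr_01[of th' "int n - 1"] by auto
    then show ?thesis by (simp add: thr_0_iff)
  qed (use p3 in simp)
  have "thr th (int n - 1) = kv'" using match_bottom(1) LhE by simp
  then show "th = int n - kv'" using thge p3 by (cases "th = int n") (auto simp: thr_def)
  have th'le: "th' \<le> 1"
  proof (cases "n = 1")
    case False
    then have "1 + thr th 0 + Lv = int n + thr th' 1" using match_hpaths[of 1] LhE n_ge_1 by simp
    then have "thr th' 1 = 1" using LvE thr_01[of th 0] thr_01[of th' 1] by auto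
    then show ?thesis by (simp add: thr_1_iff)
  qed (use p4 in simp)
  have "kv = thr th' 0" using match_top(2) LvE by simp
  then show "th' = 1 - kv" using th'le p4 by (cases "th' = 0") (auto simp: thr_def)
qed

lemma decode_htile:
  assumes LvE: "Lv = int n" and LhE: "Lh = int n - 1"
  shows "(path_label n kv' tv' Lv, path_label n kh' th' Lh, path_label n kv tv Lv, path_label n kh th Lh) \<in> tiles True n"
proof -
  note v = htile_frame_vertical[OF assms] and h = htile_frame_horizontal[OF assms]
  have "path_tile_ok True n (1 - kv) (1 - kv') tv"
    using paths(1,2) LvE v unfolding path_tile_ok_def path_ok_def by auto
  then have "htile n (1 - kv) (1 - kv') tv \<in> tiles True n" by (rule htile_in_tiles)
  moreover have "htile n (1 - kv) (1 - kv') tv = (path_label n kv' tv' Lv, path_label n kh' th' Lh, path_label n kv tv Lv, path_label n kh th Lh)"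
    using LvE LhE v h by (simp add: path_label_def htile_def algebra_simps)
  ultimately show ?thesis by simp
qed

lemma decode_junction:
  assumes LvE: "Lv = int n" and LhE: "Lh = int n"
  shows "(path_label n kv' tv' Lv, path_label n kh' th' Lh, path_label n kv tv Lv, path_label n kh th Lh) \<in> tiles True n"
proof -
  have p1: "0 \<le> tv" "tv \<le> int n + 1" using paths(1) LvE by (auto simp: path_ok_def)
  have p2: "kv' = 0 \<or> kv' = 1" "0 \<le> tv'" "tv' = 0 \<longrightarrow> kv' = 1" using paths(2) by (auto simp: path_ok_def)
  have p3: "0 \<le> th" "th \<le> int n + 1" using paths(3) LhE by (auto simp: path_ok_def)
  have p4: "kh' = 0 \<or> kh' = 1" "0 \<le> th'" "th' = 0 \<longrightarrow> kh' = 1" using paths(4) by (auto simp: path_ok_def)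
  have r1: "thr tv (d - 1) = 0 \<and> thr tv' d = 1" if "1 \<le> d" "d \<le> int n" for d
    using match_vpaths[of d] that LvE LhE thr_01[of tv "d - 1"] thr_01[of tv' d] by auto
  have r2: "thr th (d - 1) = 0 \<and> thr th' d = 1" if "1 \<le> d" "d \<le> int n" for d
    using match_hpaths[of d] that LvE LhE thr_01[of th "d - 1"] thr_01[of th' d] by auto
  have tvge: "int n \<le> tv" using r1[of "int n"] n_ge_1 by (simp add: thr_0_iff)
  have tv'le: "tv' \<le> 1" using r1[of 1] n_ge_1 by (simp add: thr_1_iff)
  have thge: "int n \<le> th" using r2[of "int n"] n_ge_1 by (simp add: thr_0_iff)
  have th'le: "th' \<le> 1" using r2[of 1] n_ge_1 by (simp add: thr_1_iff)
  have th: "th = int n + 1 - kv'" using match_bottom(1) LhE thge p3 by (cases "th = int n") (auto simp: thr_def)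
  have tv': "tv' = 1 - kh" using match_bottom(2) LhE tv'le p2 by (cases "tv' = 0") (auto simp: thr_def)
  have tv: "tv = int n + 1 - kh'" using match_top(1) LvE tvge p1 by (cases "tv = int n") (auto simp: thr_def)
  have th': "th' = 1 - kv" using match_top(2) LvE th'le p4 by (cases "th' = 0") (auto simp: thr_def)
  have ok: "junction_ok True (1 - kv') tv' (1 - kh') th'"
    using p2 p4 tv'le th'le unfolding junction_ok_def bit_pairs_def by auto
  have "junction n (1 - kv') tv' (1 - kh') th' \<in> tiles True n" by (rule junction_in_tiles[OF ok])
  moreover have "junction n (1 - kv') tv' (1 - kh') th' = (path_label n kv' tv' Lv, path_label n kh' th' Lh, path_label n kv tv Lv, path_label n kh th Lh)"
    using LvE LhE tv th tv' th' by (simp add: path_label_def junction_def algebra_simps)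
  ultimately show ?thesis by simp
qed

lemma decode_in_tiles: "(path_label n kv' tv' Lv, path_label n kh' th' Lh, path_label n kv tv Lv, path_label n kh th Lh) \<in> tiles True n"
proof -
  consider "Lv = int n - 1" "Lh = int n - 1" | "Lv = int n" "Lh = int n - 1"
    | "Lv = int n - 1" "Lh = int n" | "Lv = int n" "Lh = int n" using frame_lengths by blast
  then show ?thesis
  proof cases
    case 1 then show ?thesis by (rule decode_wtile)
  next
    case 2 then show ?thesis by (rule decode_htile)
  next
    case 3
    interpret S: tile_frame n kh th kh' th' kv tv kv' tv' Lh Lv by (rule tile_frame_swap)
    have "(path_label n kh' th' Lh, path_label n kv' tv' Lv, path_label n kh th Lh, path_label n kv tv Lv) \<in> tiles True n"
      by (rule S.decode_htile) (use 3 in auto)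
    from hat_in_tiles[OF this] show ?thesis by (simp add: hat_def)
  next
    case 4 then show ?thesis by (rule decode_junction)
  qed
qed

end

section \<open>Desubstitution\<close>

text \<open>The block \<open>(i, j)\<close> of a tiling \<open>y\<close> lies between the columns \<open>col0 y i\<close>, \<open>col0 y (i + 1)\<close> and the rows
  \<open>row0 y j\<close>, \<open>row0 y (j + 1)\<close>. The vertical path on its left side has length \<open>vgap y j\<close>, starts with
  counter \<open>vcount y i j\<close> and carries the bits \<open>vbit y i j\<close>; the horizontal path on its bottom side is
  described likewise by \<open>hgap\<close>, \<open>hcount\<close>, \<open>hthr\<close>. The preimage tile \<open>desubst n y (i, j)\<close> has the labels
  encoding the four paths around the block. The choice in \<open>vthr\<close> is justified by \<open>vthr_prop\<close>.\<close>

definition vgap :: "(int \<times> int \<Rightarrow> tile) \<Rightarrow> int \<Rightarrow> int" where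
  "vgap y j = row0 y (j + 1) - row0 y j - 1"
definition vcount :: "(int \<times> int \<Rightarrow> tile) \<Rightarrow> int \<Rightarrow> int \<Rightarrow> int" where
  "vcount y i j = lcount (TOP (y (col0 y i, row0 y j)))"
definition vbit :: "(int \<times> int \<Rightarrow> tile) \<Rightarrow> int \<Rightarrow> int \<Rightarrow> int \<Rightarrow> int" where
  "vbit y i j d = lbit (TOP (y (col0 y i, row0 y j + d)))"
definition vthr :: "(int \<times> int \<Rightarrow> tile) \<Rightarrow> int \<Rightarrow> int \<Rightarrow> int" where
  "vthr y i j = (SOME th. 0 \<le> th \<and> th \<le> vgap y j + 1 \<and> (\<forall>d. 0 \<le> d \<and> d \<le> vgap y j \<longrightarrow> vbit y i j d = thr th d))"

definition hgap :: "(int \<times> int \<Rightarrow> tile) \<Rightarrow> int \<Rightarrow> int" where "hgap y i = vgap (transpose_cfg y) i"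
definition hcount :: "(int \<times> int \<Rightarrow> tile) \<Rightarrow> int \<Rightarrow> int \<Rightarrow> int" where "hcount y i j = vcount (transpose_cfg y) j i"
definition hthr :: "(int \<times> int \<Rightarrow> tile) \<Rightarrow> int \<Rightarrow> int \<Rightarrow> int" where "hthr y i j = vthr (transpose_cfg y) j i"

definition desubst :: "nat \<Rightarrow> (int \<times> int \<Rightarrow> tile) \<Rightarrow> (int \<times> int \<Rightarrow> tile)" where
  "desubst n y p = (let i = fst p; j = snd p in
     (path_label n (vcount y (i + 1) j) (vthr y (i + 1) j) (vgap y j),
      path_label n (hcount y i (j + 1)) (hthr y i (j + 1)) (hgap y i),
      path_label n (vcount y i j) (vthr y i j) (vgap y j),
      path_label n (hcount y i j) (hthr y i j) (hgap y i)))"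

lemma col0_transpose[simp]: "col0 (transpose_cfg y) = row0 y" by (rule ext) (simp add: col0_def)
lemma row0_transpose: "row0 (transpose_cfg y) = col0 y" by (rule ext) (simp add: col0_def)

context omega_tiling
begin

lemma omega_tiling_transpose: "omega_tiling n (transpose_cfg y)"
  using tiling_transpose unfolding omega_tiling_def .

lemma vgap_vals: "vgap y j = int n - 1 \<or> vgap y j = int n"
  using row0_gap_succ[of j] by (simp add: vgap_def)

lemma vgap_nonneg: "0 \<le> vgap y j" using vgap_vals[of j] n_ge_1 by auto

lemma row0_vgap: "row0 y (j + 1) = row0 y j + vgap y j + 1" by (simp add: vgap_def)

lemma between_row0_gap: "1 \<le> d \<Longrightarrow> d \<le> vgap y j \<Longrightarrow> row_kind y (row0 y j + d) = 1"
  using between_row0[of j "row0 y j + d"] by (simp add: vgap_def)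

lemma TOP_count_gap: "0 \<le> d \<Longrightarrow> d \<le> vgap y j \<Longrightarrow> lcount (TOP (y (c, row0 y j + d))) = lcount (TOP (y (c, row0 y j))) + d"
  using TOP_count_run[of "nat d" "row0 y j" c] between_row0_gap[of _ j] by simp

lemma vpath_vtile:
  assumes "1 \<le> d" "d \<le> vgap y j"
  shows "y (col0 y i, row0 y j + d) = vtile n (vbit y i j (d - 1)) (vbit y i j d) (vcount y i j + d - 1)
    \<and> path_tile_ok False n (vbit y i j (d - 1)) (vbit y i j d) (vcount y i j + d - 1)"
proof -
  let ?c = "col0 y i" and ?r = "row0 y j"
  obtain b0 b1 cc where H: "y (?c, ?r + d) = vtile n b0 b1 cc" "path_tile_ok False n b0 b1 cc"
    using vtile_at[OF between_row0_gap[OF assms] col0_kind] by blast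
  have "BOTTOM (y (?c, ?r + (d - 1) + 1)) = TOP (y (?c, ?r + (d - 1)))" by (rule match_v)
  then have e: "(0, b0, cc) = TOP (y (?c, ?r + (d - 1)))" using H by simp
  have "lcount (TOP (y (?c, ?r + (d - 1)))) = lcount (TOP (y (?c, ?r))) + (d - 1)"
    by (rule TOP_count_gap) (use assms in auto)
  then have "b0 = vbit y i j (d - 1)" "cc = vcount y i j + d - 1"
    using e by (auto simp: vbit_def vcount_def lcount_def lbit_def dest: sym)
  moreover have "b1 = vbit y i j d" using H by (simp add: vbit_def lbit_def)
  ultimately show ?thesis using H by simp
qed

lemma junction_at_corner:
  obtains k l rr s where "y (col0 y i, row0 y j) = junction n k l rr s" "junction_ok False k l rr s"
  using junction_at[OF row0_kind col0_kind] by blast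

lemma vbit_01: "0 \<le> d \<Longrightarrow> d \<le> vgap y j \<Longrightarrow> vbit y i j d = 0 \<or> vbit y i j d = 1"
proof (cases "d = 0")
  case True
  obtain k l rr s where "y (col0 y i, row0 y j) = junction n k l rr s" "junction_ok False k l rr s" by (rule junction_at_corner)
  then show ?thesis using True by (auto simp: vbit_def lbit_def junction_ok_def bit_pairs_def)
next
  case False
  assume "0 \<le> d" "d \<le> vgap y j"
  then have "path_tile_ok False n (vbit y i j (d - 1)) (vbit y i j d) (vcount y i j + d - 1)" using vpath_vtile[of d j i] False by auto
  from path_tile_ok_bounds[OF this] show ?thesis by auto
qed

lemma vbit_mono: "1 \<le> d \<Longrightarrow> d \<le> vgap y j \<Longrightarrow> vbit y i j (d - 1) \<le> vbit y i j d"
  using vpath_vtile[of d j i] unfolding path_tile_ok_def by auto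

lemma vthr_prop: "0 \<le> vthr y i j \<and> vthr y i j \<le> vgap y j + 1 \<and> (\<forall>d. 0 \<le> d \<and> d \<le> vgap y j \<longrightarrow> vbit y i j d = thr (vthr y i j) d)"
proof -
  have "\<exists>t. 0 \<le> t \<and> t \<le> vgap y j + 1 \<and> (\<forall>d. 0 \<le> d \<and> d \<le> vgap y j \<longrightarrow> vbit y i j d = thr t d)"
    by (rule monotone_01_thr) (use vbit_01 vbit_mono vgap_nonneg in auto)
  then show ?thesis unfolding vthr_def by (rule someI_ex)
qed

lemma vbit_thr: "0 \<le> d \<Longrightarrow> d \<le> vgap y j \<Longrightarrow> vbit y i j d = thr (vthr y i j) d"
  using vthr_prop by blast

lemma junction_at_next_corner:
  obtains k l rr s where "y (col0 y i, row0 y (j + 1)) = junction n k l rr s" "junction_ok False k l rr s"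
    "l = vbit y i j (vgap y j)" "k + int n = vcount y i j + vgap y j"
proof -
  obtain k l rr s where J: "y (col0 y i, row0 y (j + 1)) = junction n k l rr s" "junction_ok False k l rr s"
    using junction_at[OF row0_kind col0_kind] by blast
  have "BOTTOM (y (col0 y i, row0 y j + vgap y j + 1)) = TOP (y (col0 y i, row0 y j + vgap y j))" by (rule match_v)
  moreover have "lcount (TOP (y (col0 y i, row0 y j + vgap y j))) = vcount y i j + vgap y j"
    using TOP_count_gap[of "vgap y j" j "col0 y i"] vgap_nonneg[of j] by (simp add: vcount_def)
  ultimately have "l = vbit y i j (vgap y j)" "k + int n = vcount y i j + vgap y j"
    using J row0_vgap[of j] by (auto simp: vbit_def lbit_def lcount_def dest: sym)
  then show ?thesis using J that by blast
qed

lemma path_ok_vgap: "path_ok n (vcount y i j) (vthr y i j) (vgap y j)"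
proof -
  obtain k l rr s where J: "y (col0 y i, row0 y j) = junction n k l rr s" "junction_ok False k l rr s" by (rule junction_at_corner)
  obtain k' l' rr' s' where J': "y (col0 y i, row0 y (j + 1)) = junction n k' l' rr' s'" "junction_ok False k' l' rr' s'"
    "l' = vbit y i j (vgap y j)" "k' + int n = vcount y i j + vgap y j" by (rule junction_at_next_corner)
  have s: "vcount y i j = s" "vbit y i j 0 = rr" using J by (simp_all add: vcount_def vbit_def lcount_def lbit_def)
  have vp: "0 \<le> vthr y i j" "vthr y i j \<le> vgap y j + 1" using vthr_prop by auto
  have b0: "vbit y i j 0 = thr (vthr y i j) 0" and bL: "vbit y i j (vgap y j) = thr (vthr y i j) (vgap y j)"
    using vbit_thr vgap_nonneg by auto
  show ?thesis unfolding path_ok_def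
  proof (intro conjI impI)
    show "vcount y i j = 0 \<or> vcount y i j = 1" using s J(2) by (auto simp: junction_ok_def bit_pairs_def)
    show "vgap y j = int n - 1 \<or> vgap y j = int n" by (rule vgap_vals)
    show "0 \<le> vthr y i j" "vthr y i j \<le> vgap y j + 1" using vp by auto
    show "vcount y i j = 1" if "vthr y i j = 0"
      using that b0 s J(2) by (auto simp: thr_def junction_ok_def bit_pairs_def)
    show "vcount y i j + vgap y j = int n \<or> vcount y i j + vgap y j = int n + 1"
      using J'(2,4) by (auto simp: junction_ok_def bit_pairs_def)
    show "vthr y i j \<le> vgap y j" if "vcount y i j + vgap y j = int n + 1"
    proof -
      have "k' = 1" using that J'(4) by simp
      then have "l' = 1" using J'(2) by (auto simp: junction_ok_def bit_pairs_def)
      then show ?thesis using J'(3) bL by (simp add: thr_def split: if_splits)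
    qed
  qed
qed

lemma vthr_match:
  assumes "1 \<le> d" "d \<le> vgap y j"
  shows "1 + thr (vthr y i j) (d - 1) + hgap y i = int n + thr (vthr y (i + 1) j) d"
proof -
  let ?c = "col0 y i" and ?c' = "col0 y (i + 1)" and ?\<rho> = "row0 y j + d"
  interpret T: omega_tiling n "transpose_cfg y" by (rule omega_tiling_transpose)
  have hgap: "?c' = ?c + hgap y i + 1" by (simp add: hgap_def vgap_def row0_transpose)
  have Lh0: "0 \<le> hgap y i" using T.vgap_nonneg by (simp add: hgap_def)
  have "lcount (RIGHT (y (?c + int (nat (hgap y i)), ?\<rho>))) = lcount (RIGHT (y (?c, ?\<rho>))) + int (nat (hgap y i))"
  proof (rule RIGHT_count_run)
    fix d assume "1 \<le> d" "d \<le> int (nat (hgap y i))"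
    then show "col_kind y (col0 y i + d) = 1" using between_col0[of i "col0 y i + d"] hgap Lh0 by simp
  qed
  then have r: "lcount (RIGHT (y (?c + hgap y i, ?\<rho>))) = lcount (RIGHT (y (?c, ?\<rho>))) + hgap y i" using Lh0 by simp
  have h1: "y (?c, ?\<rho>) = vtile n (vbit y i j (d - 1)) (vbit y i j d) (vcount y i j + d - 1)" using vpath_vtile assms by blast
  have h2: "y (?c', ?\<rho>) = vtile n (vbit y (i+1) j (d - 1)) (vbit y (i+1) j d) (vcount y (i+1) j + d - 1)" using vpath_vtile assms by blast
  have A: "lcount (RIGHT (y (?c + hgap y i, ?\<rho>))) = 1 + vbit y i j (d - 1) + hgap y i" using r h1 by (simp add: lcount_def)
  have "LEFT (y (?c + hgap y i + 1, ?\<rho>)) = RIGHT (y (?c + hgap y i, ?\<rho>))" by (rule match_h)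
  then have B: "RIGHT (y (?c + hgap y i, ?\<rho>)) = (1, 1, int n + vbit y (i + 1) j d)" using h2 hgap by simp
  have "int n + vbit y (i+1) j d = 1 + vbit y i j (d - 1) + hgap y i" using A B by (simp add: lcount_def)
  then show ?thesis using vbit_thr[of "d - 1" j i] vbit_thr[of d j "i+1"] assms by simp
qed

lemma vpath_end_match: "thr (vthr y i j) (vgap y j) = hcount y i (j + 1) \<and> vcount y i j + vgap y j = thr (hthr y i (j + 1)) 0 + int n"
proof -
  interpret T: omega_tiling n "transpose_cfg y" by (rule omega_tiling_transpose)
  obtain k' l' rr' s' where J': "y (col0 y i, row0 y (j + 1)) = junction n k' l' rr' s'" "junction_ok False k' l' rr' s'"
    "l' = vbit y i j (vgap y j)" "k' + int n = vcount y i j + vgap y j" by (rule junction_at_next_corner)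
  have "hcount y i (j + 1) = l'" using J' by (simp add: hcount_def vcount_def row0_transpose lcount_def)
  moreover have "thr (hthr y i (j + 1)) 0 = k'"
    using T.vbit_thr[of 0 i "j+1"] T.vgap_nonneg[of i] J' by (simp add: hthr_def vbit_def row0_transpose lbit_def)
  ultimately show ?thesis using J' vbit_thr[of "vgap y j" j i] vgap_nonneg[of j] by simp
qed

lemma tile_frame_cell: "tile_frame n (vcount y i j) (vthr y i j) (vcount y (i+1) j) (vthr y (i+1) j) (hcount y i j) (hthr y i j)
   (hcount y i (j+1)) (hthr y i (j+1)) (vgap y j) (hgap y i)"
proof -
  interpret T: omega_tiling n "transpose_cfg y" by (rule omega_tiling_transpose)
  show ?thesis
  proof (unfold_locales)
    show "1 \<le> n" by (rule n_ge_1)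
    show "path_ok n (vcount y i j) (vthr y i j) (vgap y j)" by (rule path_ok_vgap)
    show "path_ok n (vcount y (i + 1) j) (vthr y (i + 1) j) (vgap y j)" by (rule path_ok_vgap)
    show "path_ok n (hcount y i j) (hthr y i j) (hgap y i)" using T.path_ok_vgap[of j i] by (simp add: hcount_def hthr_def hgap_def)
    show "path_ok n (hcount y i (j + 1)) (hthr y i (j + 1)) (hgap y i)" using T.path_ok_vgap[of "j+1" i] by (simp add: hcount_def hthr_def hgap_def)
    show "\<And>d. 1 \<le> d \<Longrightarrow> d \<le> vgap y j \<Longrightarrow> 1 + thr (vthr y i j) (d - 1) + hgap y i = int n + thr (vthr y (i + 1) j) d"
      by (rule vthr_match)
    show "thr (hthr y i j) (hgap y i) = vcount y (i + 1) j" "hcount y i j + hgap y i = thr (vthr y (i + 1) j) 0 + int n"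
      using T.vpath_end_match[of j i] by (simp_all add: hcount_def hthr_def hgap_def)
    show "\<And>d. 1 \<le> d \<Longrightarrow> d \<le> hgap y i \<Longrightarrow> 1 + thr (hthr y i j) (d - 1) + vgap y j = int n + thr (hthr y i (j + 1)) d"
      using T.vthr_match[of _ i j] by (simp add: hcount_def hthr_def hgap_def)
    show "thr (vthr y i j) (vgap y j) = hcount y i (j + 1)" "vcount y i j + vgap y j = thr (hthr y i (j + 1)) 0 + int n"
      using vpath_end_match[of i j] by auto
  qed
qed

lemma desubst_in_tiles_ext: "desubst n y p \<in> tiles True n"
proof -
  obtain i j where p: "p = (i, j)" by fastforce
  interpret D: tile_frame n "vcount y i j" "vthr y i j" "vcount y (i+1) j" "vthr y (i+1) j" "hcount y i j" "hthr y i j"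
   "hcount y i (j+1)" "hthr y i (j+1)" "vgap y j" "hgap y i" by (rule tile_frame_cell)
  show ?thesis using D.decode_in_tiles p by (simp add: desubst_def)
qed

lemma desubst_valid: "valid (tiles False n) (desubst n y)"
proof -
  have "valid (tiles True n) (desubst n y)"
    unfolding valid_def using desubst_in_tiles_ext by (auto simp: desubst_def Let_def RIGHT_def LEFT_def TOP_def BOTTOM_def)
  then interpret X: tiling n True "desubst n y" using n_ge_1 by unfold_locales
  show ?thesis by (rule X.valid_tiles_False)
qed

lemma col0_hgap: "col0 y (i + 1) = col0 y i + hgap y i + 1"
  by (simp add: hgap_def vgap_def row0_transpose)

lemma hgap_nonneg: "0 \<le> hgap y i"
  using omega_tiling.vgap_nonneg[OF omega_tiling_transpose] by (simp add: hgap_def)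

lemma vpath_thr:
  assumes "1 \<le> d" "d \<le> vgap y j"
  shows "y (col0 y i, row0 y j + d) = vtile n (thr (vthr y i j) (d - 1)) (thr (vthr y i j) d) (vcount y i j + d - 1)"
  using vpath_vtile[OF assms] vbit_thr[of "d - 1" j i] vbit_thr[of d j i] assms by simp

lemma hpath_thr:
  assumes "1 \<le> d" "d \<le> hgap y i"
  shows "y (col0 y i + d, row0 y j) = htile n (thr (hthr y i j) (d - 1)) (thr (hthr y i j) d) (hcount y i j + d - 1)"
proof -
  have "transpose_cfg y (row0 y j, col0 y i + d) = vtile n (thr (hthr y i j) (d - 1)) (thr (hthr y i j) d) (hcount y i j + d - 1)"
    using omega_tiling.vpath_thr[OF omega_tiling_transpose, of d i j] assms
    by (simp add: hcount_def hthr_def hgap_def row0_transpose)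
  then show ?thesis by (metis hat_hat hat_vtile transpose_apply)
qed

text \<open>The counters of an interior tile grow by one per column, resp. row, from the values handed
  over by the paths on the left and bottom sides of the block.\<close>

lemma cell_eq_wtile:
  assumes d1: "1 \<le> d1" "d1 \<le> hgap y i" and d2: "1 \<le> d2" "d2 \<le> vgap y j"
  shows "y (col0 y i + d1, row0 y j + d2) = wtile (thr (vthr y i j) (d2 - 1) + d1) (thr (hthr y i j) (d1 - 1) + d2)"
proof -
  let ?c = "col0 y i" and ?r = "row0 y j"
  have "row_kind y (?r + d2) = 1" using between_row0_gap d2 by blast
  moreover have "col_kind y (?c + d1) = 1" using between_col0[of i "?c + d1"] d1 col0_hgap[of i] by simp
  ultimately obtain a b where W: "y (?c + d1, ?r + d2) = wtile a b" using wtile_at by blast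
  have "lcount (RIGHT (y (?c + int (nat (d1 - 1)), ?r + d2))) = lcount (RIGHT (y (?c, ?r + d2))) + int (nat (d1 - 1))"
  proof (rule RIGHT_count_run)
    fix d assume "1 \<le> d" "d \<le> int (nat (d1 - 1))"
    then show "col_kind y (?c + d) = 1" using between_col0[of i "?c + d"] d1 col0_hgap[of i] by simp
  qed
  moreover have "RIGHT (y (?c + (d1 - 1), ?r + d2)) = (1, 1, a)"
    using match_h[of "?c + (d1 - 1)" "?r + d2"] W by simp
  ultimately have a: "a = thr (vthr y i j) (d2 - 1) + d1"
    using vpath_thr[OF d2, of i] d1 by (simp add: lcount_def)
  have "lcount (TOP (y (?c + d1, ?r + (d2 - 1)))) = lcount (TOP (y (?c + d1, ?r))) + (d2 - 1)"
    by (rule TOP_count_gap) (use d2 in auto)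
  moreover have "TOP (y (?c + d1, ?r + (d2 - 1))) = (1, 1, b)"
    using match_v[of "?c + d1" "?r + (d2 - 1)"] W by simp
  ultimately have b: "b = thr (hthr y i j) (d1 - 1) + d2"
    using hpath_thr[OF d1, of j] d2 by (simp add: lcount_def)
  show ?thesis using W a b by simp
qed

lemma cell_eq_block:
  assumes "0 \<le> d1" "d1 \<le> hgap y i" "0 \<le> d2" "d2 \<le> vgap y j"
  shows "y (col0 y i + d1, row0 y j + d2) = block n (vcount y i j) (vthr y i j) (hcount y i j) (hthr y i j) d1 d2"
proof (cases "d1 = 0 \<and> d2 = 0")
  case True
  obtain k l rr s where J: "y (col0 y i, row0 y j) = junction n k l rr s" by (rule junction_at_corner)
  have "rr = thr (vthr y i j) 0" "s = vcount y i j"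
    using J vbit_thr[of 0 j i] vgap_nonneg[of j] by (simp_all add: vbit_def vcount_def lbit_def lcount_def)
  moreover have "k = thr (hthr y i j) 0" "l = hcount y i j"
    using J omega_tiling.vbit_thr[OF omega_tiling_transpose, of 0 i j] hgap_nonneg[of i]
    by (simp_all add: vbit_def hcount_def hthr_def hgap_def vcount_def row0_transpose lbit_def lcount_def)
  ultimately show ?thesis using J True by (simp add: block_def)
next
  case False
  then show ?thesis
    using vpath_thr[of d2 j i] hpath_thr[of d1 i j] cell_eq_wtile[of d1 i d2 j] assms
    by (auto simp: block_def)
qed

lemma desubst_LEFT: "LEFT (desubst n y (i, j)) = path_label n (vcount y i j) (vthr y i j) (vgap y j)"
  by (simp add: desubst_def LEFT_def)

lemma desubst_BOTTOM: "BOTTOM (desubst n y (i, j)) = path_label n (hcount y i j) (hthr y i j) (hgap y i)"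
  by (simp add: desubst_def BOTTOM_def)

lemma path_ok_hgap: "path_ok n (hcount y i j) (hthr y i j) (hgap y i)"
  using omega_tiling.path_ok_vgap[OF omega_tiling_transpose, of j i] by (simp add: hcount_def hthr_def hgap_def)

lemma shift_subst_desubst: "y = shift (- col0 y 0, - row0 y 0) (subst_cfg (omega n) (desubst n y))"
proof -
  define x where "x = desubst n y"
  interpret X: omega_tiling n x using desubst_valid n_ge_1 unfolding x_def by unfold_locales
  have len_BOTTOM: "path_len n (BOTTOM (x (i, j))) = hgap y i" for i j
    unfolding x_def desubst_BOTTOM by (rule path_label_decode(3)[OF path_ok_hgap])
  have len_LEFT: "path_len n (LEFT (x (i, j))) = vgap y j" for i j
    unfolding x_def desubst_LEFT by (rule path_label_decode(3)[OF path_ok_vgap])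
  have blocks: "block_of n (LEFT (x (i, j))) (BOTTOM (x (i, j))) d1 d2 = block n (vcount y i j) (vthr y i j) (hcount y i j) (hthr y i j) d1 d2" for i j d1 d2
    unfolding x_def desubst_LEFT desubst_BOTTOM block_of_def
    using path_label_decode[OF path_ok_vgap] path_label_decode[OF path_ok_hgap] by simp
  have "int (X.block_width i) = col0 y (i + 1) - col0 y i" for i
    using X.block_width_eq[of i 0] len_BOTTOM[of i 0] col0_hgap[of i] by simp
  then have pos_W: "blk_pos X.block_width i = col0 y i - col0 y 0" for i by (rule blk_pos_eq_diff)
  have "int (X.block_height j) = row0 y (j + 1) - row0 y j" for j
    using X.block_height_eq[where i=0 and j=j] len_LEFT[of 0 j] by (simp add: vgap_def)
  then have pos_H: "blk_pos X.block_height j = row0 y j - row0 y 0" for j by (rule blk_pos_eq_diff)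
  show ?thesis
  proof
    fix p :: "int \<times> int"
    obtain i j d1 d2 where c: "fst p - col0 y 0 = blk_pos X.block_width i + d1" "snd p - row0 y 0 = blk_pos X.block_height j + d2"
      "0 \<le> d1" "d1 \<le> path_len n (BOTTOM (x (i, j)))" "0 \<le> d2" "d2 \<le> path_len n (LEFT (x (i, j)))"
      by (rule X.cell_exists)
    have "shift (- col0 y 0, - row0 y 0) (subst_cfg (omega n) x) p = subst_cfg (omega n) x (blk_pos X.block_width i + d1, blk_pos X.block_height j + d2)"
      using c by (simp add: shift_def)
    also have "\<dots> = block n (vcount y i j) (vthr y i j) (hcount y i j) (hthr y i j) d1 d2"
      using X.cell_eval[OF c(3-6)] blocks by simp
    also have "\<dots> = y (col0 y i + d1, row0 y j + d2)"
      using cell_eq_block[of d1 i d2 j] c len_BOTTOM len_LEFT by simp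
    also have "\<dots> = y p" using c pos_W pos_H by (cases p) simp
    finally show "y p = shift (- col0 y 0, - row0 y 0) (subst_cfg (omega n) (desubst n y)) p"
      by (simp add: x_def)
  qed
qed

end

lemma valid_shift: "valid T z \<Longrightarrow> valid T (shift k z)"
  unfolding valid_def shift_def by (auto simp: algebra_simps)

lemma omega_is_morphism:
  assumes "1 \<le> n"
  shows "is_morphism_on (Omega n) (omega n)"
  unfolding is_morphism_on_def
proof (intro ballI allI)
  fix x a b assume "x \<in> Omega n"
  then interpret omega_tiling n x using assms by unfold_locales (simp add: Omega_iff)
  show "snd (wsize (omega n (x (a, b)))) = snd (wsize (omega n (x (a + 1, b)))) \<and>
      fst (wsize (omega n (x (a, b)))) = fst (wsize (omega n (x (a, b + 1))))"
    by (rule omega_morphism)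
qed

lemma omega_maps_Omega:
  assumes "1 \<le> n" "x \<in> Omega n"
  shows "subst_cfg (omega n) x \<in> Omega n"
proof -
  interpret omega_tiling n x using assms by unfold_locales (simp_all add: Omega_iff)
  show ?thesis using subst_valid by (simp add: Omega_iff)
qed

lemma Omega_eq_shifted_image:
  assumes "1 \<le> n"
  shows "Omega n = {shift k (subst_cfg (omega n) x) | k x. x \<in> Omega n}"
proof (intro set_eqI iffI)
  fix y assume "y \<in> Omega n"
  then interpret omega_tiling n y using assms by unfold_locales (simp add: Omega_iff)
  have "desubst n y \<in> Omega n" using desubst_valid by (simp add: Omega_iff)
  then show "y \<in> {shift k (subst_cfg (omega n) x) | k x. x \<in> Omega n}"
    using shift_subst_desubst by blast
next
  fix y assume "y \<in> {shift k (subst_cfg (omega n) x) | k x. x \<in> Omega n}"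
  then obtain k x where "y = shift k (subst_cfg (omega n) x)" "x \<in> Omega n" by blast
  then show "y \<in> Omega n" using omega_maps_Omega[OF assms] valid_shift by (simp add: Omega_iff)
qed

theorem theoremA:
  fixes n :: nat
  assumes "1 \<le> n"
  shows "\<exists>\<omega> :: tile \<Rightarrow> tile word2.
           is_morphism_on (Omega n) \<omega> \<and>
           (\<forall>x\<in>Omega n. subst_cfg \<omega> x \<in> Omega n) \<and>
           expansive (Omega n) \<omega> \<and>
           recognizable (Omega n) \<omega> \<and>
           Omega n = {shift k (subst_cfg \<omega> x) | k x. x \<in> Omega n}"
proof (intro exI[of _ "omega n"] conjI ballI)
  show "is_morphism_on (Omega n) (omega n)" using assms by (rule omega_is_morphism)
  show "subst_cfg (omega n) x \<in> Omega n" if "x \<in> Omega n" for x using assms that by (rule omega_maps_Omega)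
  show "expansive (Omega n) (omega n)" using assms by (rule expansive_omega)
  show "recognizable (Omega n) (omega n)" using assms by (rule recognizable_omega)
  show "Omega n = {shift k (subst_cfg (omega n) x) | k x. x \<in> Omega n}" using assms by (rule Omega_eq_shifted_image)
qed

end
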